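(* (Kesten's lemma for repelling polymers.) Let $\Omega$ be a finite subset of $\mathbb{Z}^d\setminus\{0\}$ invariant under all symmetries of $\mathbb{Z}^d$, let $\phi:\mathbb{Z}_{\ge 0}\to[0,\infty)$ satisfy $\phi(0)=\phi(1)=0$ and $\phi(a+b)\ge\phi(a)+\phi(b)$, and let $\rho$ be a probability mass function on $\Omega$ invariant under all symmetries of $\mathbb{Z}^d$. Then $$\sum_{\gamma\in\mathrm{iB}}e^{-\lambda_0|\gamma|}\sigma(\gamma)=1.$$
   Context: A walk of length $n$ is a sequence $\gamma=(\gamma(i))_{i=0}^n$ in $\mathbb{Z}^d$ with $\gamma(i)-\gamma(i-1)\in\Omega$; $|\gamma|=n$; $\mathrm{W}_n$ is the set of such walks with $\gamma(0)=0$. With $l_v(\gamma)=\#\{k:\gamma(k)=v\}$, $\sigma(\gamma)=\prod_{v}e^{-\phi(l_v(\gamma))}\prod_{i=1}^n\rho(\gamma(i)-\gamma(i-1))$, $Z_n=\sum_{\gamma\in\mathrm{W}_n}\sigma(\gamma)$ and $\lambda_0=\lim_n\tfrac1n\log Z_n$ (which exists). $x(v)$ is the first coordinate of $v$. A bridge of length $n\ge1$ is $\gamma\in\mathrm{W}_n$ with $x(\gamma(0))<x(\gamma(i))\le x(\gamma(n))$ for $1\le i\le n$. An integer $i\in\{1,\dots,n-1\}$ is a renewal time of a bridge $\gamma$ of length $n$ if $x(\gamma(i))<x(\gamma(k))$ for all $k>i$ and $x(\gamma(i))\ge x(\gamma(k))$ for all $k<i$. A bridge is irreducible if it has no renewal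 time; $\mathrm{iB}$ is the set of irreducible bridges of all lengths $n\ge1$. *)

theory Defs
  imports "HOL-Analysis.Analysis"
begin

text \<open>Points of Z^d are represented as functions nat => int that vanish outside {..<d}.
  Coordinate 0 is the "first coordinate" x(v).\<close>

type_synonym pt = "nat \<Rightarrow> int"

definition in_Zd :: "nat \<Rightarrow> pt \<Rightarrow> bool" where
  "in_Zd d v \<longleftrightarrow> (\<forall>i\<ge>d. v i = 0)"

definition sym_Zd :: "nat \<Rightarrow> (pt \<Rightarrow> pt) \<Rightarrow> bool" where
  "sym_Zd d g \<longleftrightarrow> (\<exists>\<pi> s. bij_betw \<pi> {..<d} {..<d} \<and> (\<forall>i. s i \<in> {1, -1::int}) \<and>
      g = (\<lambda>v i. if i < d then s i * v (\<pi> i) else 0))"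

definition xc :: "pt \<Rightarrow> int" where
  "xc v = v 0"

text \<open>A walk of length n is a list of n+1 points.\<close>
definition origin :: pt where "origin = (\<lambda>_. 0)"

definition step :: "pt \<Rightarrow> pt \<Rightarrow> pt" where
  "step u v = (\<lambda>i. v i - u i)"

definition wlen :: "pt list \<Rightarrow> nat" where
  "wlen \<gamma> = length \<gamma> - 1"

definition walks :: "pt set \<Rightarrow> nat \<Rightarrow> pt list set" where
  "walks \<Omega> n = {\<gamma>. length \<gamma> = Suc n \<and> \<gamma> ! 0 = origin \<and>
      (\<forall>i\<in>{1..n}. step (\<gamma> ! (i - 1)) (\<gamma> ! i) \<in> \<Omega>)}"

definition visits :: "pt list \<Rightarrow> pt \<Rightarrow> nat" where
  "visits \<gamma> v = length (filter (\<lambda>u. u = v) \<gamma>)"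

text \<open>sigma(gamma); vertices not visited contribute exp(-phi 0) = 1 and are omitted.\<close>
definition sigma :: "(pt \<Rightarrow> real) \<Rightarrow> (nat \<Rightarrow> real) \<Rightarrow> pt list \<Rightarrow> real" where
  "sigma \<rho> \<phi> \<gamma> = (\<Prod>v\<in>set \<gamma>. exp (- \<phi> (visits \<gamma> v))) *
      (\<Prod>i\<in>{1..wlen \<gamma>}. \<rho> (step (\<gamma> ! (i - 1)) (\<gamma> ! i)))"

definition Zn :: "pt set \<Rightarrow> (pt \<Rightarrow> real) \<Rightarrow> (nat \<Rightarrow> real) \<Rightarrow> nat \<Rightarrow> real" where
  "Zn \<Omega> \<rho> \<phi> n = (\<Sum>\<gamma>\<in>walks \<Omega> n. sigma \<rho> \<phi> \<gamma>)"

definition lambda0 :: "pt set \<Rightarrow> (pt \<Rightarrow> real) \<Rightarrow> (nat \<Rightarrow> real) \<Rightarrow> real" where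
  "lambda0 \<Omega> \<rho> \<phi> = lim (\<lambda>n. ln (Zn \<Omega> \<rho> \<phi> n) / real n)"

definition bridge :: "pt set \<Rightarrow> nat \<Rightarrow> pt list \<Rightarrow> bool" where
  "bridge \<Omega> n \<gamma> \<longleftrightarrow> n \<ge> 1 \<and> \<gamma> \<in> walks \<Omega> n \<and>
      (\<forall>i\<in>{1..n}. xc (\<gamma> ! 0) < xc (\<gamma> ! i) \<and> xc (\<gamma> ! i) \<le> xc (\<gamma> ! n))"

definition renewal_time :: "pt list \<Rightarrow> nat \<Rightarrow> bool" where
  "renewal_time \<gamma> i \<longleftrightarrow> i \<in> {1..<wlen \<gamma>} \<and>
      (\<forall>k\<in>{i<..wlen \<gamma>}. xc (\<gamma> ! i) < xc (\<gamma> ! k)) \<and>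
      (\<forall>k<i. xc (\<gamma> ! i) \<ge> xc (\<gamma> ! k))"

definition irreducible_bridges :: "pt set \<Rightarrow> pt list set" where
  "irreducible_bridges \<Omega> = {\<gamma>. \<exists>n\<ge>1. bridge \<Omega> n \<gamma> \<and> \<not> (\<exists>i. renewal_time \<gamma> i)}"

end

theory Submission
  imports Defs
begin

text \<open>
  Let \<open>B(z)\<close> and \<open>I(z)\<close> be the generating functions of bridges and of irreducible bridges, weighted
  by \<open>\<sigma>\<close>, and let \<open>z\<^sub>c = exp (-\<lambda>\<^sub>0)\<close>. Cutting a bridge at its first renewal time gives the renewal
  equation \<open>B = I + I B\<close>. Below \<open>z\<^sub>c\<close> the series \<open>B\<close> is dominated by \<open>\<Sum> Z\<^sub>n z\<^sup>n\<close> and converges,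
  so \<open>I = B / (1 + B) < 1\<close>, whence \<open>I(z\<^sub>c) \<le> 1\<close>. At \<open>z\<^sub>c\<close> itself \<open>B\<close> diverges: by Fekete's lemma for
  the submultiplicative sequence \<open>Z\<^sub>n\<close> we have \<open>Z\<^sub>n z\<^sub>c\<^sup>n \<ge> exp \<lambda>\<^sub>0\<close>, whereas cutting a walk at its
  last lowest point and then at successive last highest points (Hammersley-Welsh) bounds
  \<open>\<Sum> Z\<^sub>n z\<^sup>n\<close> by a multiple of \<open>exp (2 B(z))\<close>. If \<open>I(z\<^sub>c)\<close> stayed below some \<open>a < 1\<close>, the renewal
  equation would keep \<open>B(z\<^sub>c)\<close> below \<open>a / (1 - a)\<close>; hence \<open>I(z\<^sub>c) = 1\<close>.

  The repulsion enters only through superadditivity of \<open>\<phi>\<close>, which makes \<open>\<sigma>\<close> submultiplicative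
  under cutting, and \<open>\<phi> 0 = \<phi> 1 = 0\<close>, which makes it multiplicative when the pieces share no
  vertex, as for a bridge cut at a renewal time.
\<close>

section \<open>Sums, subadditive sequences and lists\<close>

lemma sum_le_sum_inj_on:
  fixes f :: "'a \<Rightarrow> real" and g :: "'b \<Rightarrow> real"
  assumes "finite B" "inj_on h A" "h ` A \<subseteq> B"
    and "\<And>x. x \<in> A \<Longrightarrow> f x \<le> g (h x)" "\<And>y. y \<in> B \<Longrightarrow> 0 \<le> g y"
  shows "sum f A \<le> sum g B"
proof -
  have "sum f A \<le> sum (g \<circ> h) A"
    using assms(4) by (intro sum_mono) auto
  also have "\<dots> = sum g (h ` A)"
    using sum.reindex[OF assms(2), of g] by simp
  also have "\<dots> \<le> sum g B"
    using assms by (intro sum_mono2) auto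
  finally show ?thesis .
qed

lemma subadditive_iterate:
  fixes a :: "nat \<Rightarrow> real"
  assumes "\<And>k l. 1 \<le> k \<Longrightarrow> 1 \<le> l \<Longrightarrow> a (k + l) \<le> a k + a l" "1 \<le> m" "1 \<le> r"
  shows "a (q * m + r) \<le> q * a m + a r"
proof (induction q)
  case (Suc q)
  have "a (Suc q * m + r) = a (m + (q * m + r))"
    by (simp add: algebra_simps)
  also have "\<dots> \<le> a m + a (q * m + r)"
    using assms by simp
  finally show ?case
    using Suc by (simp add: algebra_simps)
qed simp

lemma subadditive_le_linear:
  fixes a :: "nat \<Rightarrow> real"
  assumes subadd: "\<And>k l. 1 \<le> k \<Longrightarrow> 1 \<le> l \<Longrightarrow> a (k + l) \<le> a k + a l" and m: "1 \<le> m" and n: "1 \<le> n"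
  shows "a n \<le> n * (a m / m) + (m * \<bar>a m / m\<bar> + (\<Sum>r\<in>{1..m}. \<bar>a r\<bar>))"
proof -
  define A where "A = a m / m"
  define q where "q = (n - 1) div m"
  define r where "r = (n - 1) mod m + 1"
  have qr: "n = q * m + r"
    using n m unfolding q_def r_def
    by (metis One_nat_def Suc_le_D add_Suc_right diff_Suc_1 div_mult_mod_eq le_add1
        plus_1_eq_Suc add.commute)
  have r: "r \<in> {1..m}"
    using m unfolding r_def by (auto simp: Suc_le_eq)
  have "a n \<le> real (q * m) * A + a r"
    using subadditive_iterate[OF subadd m, of r q] qr r m by (simp add: A_def)
  also have "real (q * m) * A \<le> n * A + m * \<bar>A\<bar>"
  proof (cases "0 \<le> A")
    case True
    have "real (q * m) * A \<le> real n * A"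
      using True qr by (intro mult_right_mono) auto
    moreover have "0 \<le> real m * A"
      using True by simp
    ultimately show ?thesis
      unfolding abs_of_nonneg[OF True] by (meson add_increasing2)
  next
    case False
    have "real (q * m) * A \<le> (real n - m) * A"
      using qr r False by (intro mult_right_mono_neg) auto
    then show ?thesis
      using False by (simp add: algebra_simps)
  qed
  also have "a r \<le> (\<Sum>r\<in>{1..m}. \<bar>a r\<bar>)"
  proof -
    have "\<bar>a r\<bar> \<le> (\<Sum>r\<in>{1..m}. \<bar>a r\<bar>)"
      using r by (intro member_le_sum) auto
    then show ?thesis
      by linarith
  qed
  finally show ?thesis
    by (simp add: A_def)
qed

lemma fekete:
  fixes a :: "nat \<Rightarrow> real"
  assumes subadd: "\<And>k l. 1 \<le> k \<Longrightarrow> 1 \<le> l \<Longrightarrow> a (k + l) \<le> a k + a l"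
    and lower: "\<And>k. 1 \<le> k \<Longrightarrow> c * k \<le> a k"
  defines "L \<equiv> Inf ((\<lambda>k. a k / k) ` {1..})"
  shows "(\<lambda>n. a n / n) \<longlonglongrightarrow> L" and "\<And>k. 1 \<le> k \<Longrightarrow> L * k \<le> a k"
proof -
  have bdd: "bdd_below ((\<lambda>k. a k / k) ` {1..})"
    using lower by (intro bdd_belowI[of _ c]) (auto simp: le_divide_eq)
  have L_le: "L \<le> a k / k" if "1 \<le> k" for k
    unfolding L_def using that bdd by (intro cInf_lower) auto
  then show "\<And>k. 1 \<le> k \<Longrightarrow> L * k \<le> a k"
    by (simp add: field_simps)
  show "(\<lambda>n. a n / n) \<longlonglongrightarrow> L"
  proof (rule LIMSEQ_I)
    fix e :: real
    assume e: "0 < e"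
    have "\<exists>x\<in>(\<lambda>k. a k / k) ` {1..}. x < L + e / 2"
      unfolding L_def using bdd e by (intro cInf_lessD) auto
    then obtain m where m: "1 \<le> m" "a m / m < L + e / 2"
      by auto
    define K where "K = m * \<bar>a m / m\<bar> + (\<Sum>r\<in>{1..m}. \<bar>a r\<bar>)"
    obtain N :: nat where N: "2 * K / e < N"
      using reals_Archimedean2 by blast
    show "\<exists>N. \<forall>n\<ge>N. norm (a n / n - L) < e"
    proof (intro exI[of _ "Suc N"] allI impI)
      fix n
      assume n: "Suc N \<le> n"
      then have "a n / n \<le> a m / m + K / n"
        using subadditive_le_linear[OF subadd m(1), of n] by (simp add: K_def field_simps)
      moreover have "K / n < e / 2"
      proof -
        have "2 * K / e < n"
          using N n by linarith
        then show ?thesis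
          using e n by (simp add: field_simps)
      qed
      moreover have "L \<le> a n / n"
        using L_le n by simp
      ultimately have "a n / n < L + e" and "L \<le> a n / n"
        using m(2) by linarith+
      then show "norm (a n / n - L) < e"
        by simp
    qed
  qed
qed

lemma sum_convolution_le:
  fixes f g :: "nat \<Rightarrow> real"
  assumes "\<And>n. 0 \<le> f n" "\<And>n. 0 \<le> g n"
  shows "(\<Sum>n\<le>N. \<Sum>j\<le>n. f j * g (n - j)) \<le> (\<Sum>j\<le>N. f j) * (\<Sum>l\<le>N. g l)"
proof -
  have "(\<Sum>n\<le>N. \<Sum>j\<le>n. f j * g (n - j)) = (\<Sum>(i, j)\<in>{(i, j). i + j \<le> N}. f i * g j)"
    by (rule sum.triangle_reindex_eq[symmetric])
  also have "\<dots> \<le> (\<Sum>(i, j)\<in>{..N} \<times> {..N}. f i * g j)"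
    by (rule sum_mono2) (auto intro: mult_nonneg_nonneg assms)
  also have "\<dots> = (\<Sum>j\<le>N. f j) * (\<Sum>l\<le>N. g l)"
    by (simp add: sum_product sum.cartesian_product)
  finally show ?thesis .
qed

lemma sum_convolution_ge:
  fixes f g :: "nat \<Rightarrow> real"
  assumes "\<And>n. 0 \<le> f n" "\<And>n. 0 \<le> g n"
  shows "(\<Sum>j\<le>N. f j) * (\<Sum>l\<le>N. g l) \<le> (\<Sum>n\<le>2 * N. \<Sum>j\<le>n. f j * g (n - j))"
proof -
  have "(\<Sum>j\<le>N. f j) * (\<Sum>l\<le>N. g l) = (\<Sum>(i, j)\<in>{..N} \<times> {..N}. f i * g j)"
    by (simp add: sum_product sum.cartesian_product)
  also have "\<dots> \<le> (\<Sum>(i, j)\<in>{(i, j). i + j \<le> 2 * N}. f i * g j)"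
  proof (rule sum_mono2)
    show "finite {(i, j). i + j \<le> 2 * N}"
      by (rule finite_subset[of _ "{..2 * N} \<times> {..2 * N}"]) auto
  qed (auto intro: mult_nonneg_nonneg assms)
  also have "\<dots> = (\<Sum>n\<le>2 * N. \<Sum>j\<le>n. f j * g (n - j))"
    by (rule sum.triangle_reindex_eq)
  finally show ?thesis .
qed

lemma prod_one_plus_telescope:
  fixes b :: "nat \<Rightarrow> real"
  shows "(\<Prod>i\<in>{1..s}. 1 + b i) = 1 + (\<Sum>k\<in>{1..s}. b k * (\<Prod>i\<in>{1..k - 1}. 1 + b i))"
  by (induction s) (simp_all add: algebra_simps)

definition last_argmax :: "(nat \<Rightarrow> int) \<Rightarrow> nat \<Rightarrow> nat" where
  "last_argmax f n = Max {i. i \<le> n \<and> (\<forall>k\<le>n. f k \<le> f i)}"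

lemma last_argmax:
  shows "last_argmax f n \<le> n"
    and "\<And>k. k \<le> n \<Longrightarrow> f k \<le> f (last_argmax f n)"
    and "\<And>k. last_argmax f n < k \<Longrightarrow> k \<le> n \<Longrightarrow> f k < f (last_argmax f n)"
proof -
  let ?S = "{i. i \<le> n \<and> (\<forall>k\<le>n. f k \<le> f i)}"
  have fin: "finite ?S"
    by (rule finite_subset[of _ "{..n}"]) auto
  have "Max (f ` {..n}) \<in> f ` {..n}"
    by (rule Max_in) auto
  then obtain i where "i \<le> n" "f i = Max (f ` {..n})"
    by (metis atMost_iff imageE)
  then have "i \<in> ?S"
    by simp
  then have S: "last_argmax f n \<in> ?S"
    unfolding last_argmax_def using Max_in[OF fin] by blast
  then show "last_argmax f n \<le> n" "\<And>k. k \<le> n \<Longrightarrow> f k \<le> f (last_argmax f n)"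
    by auto
  show "f k < f (last_argmax f n)" if "last_argmax f n < k" "k \<le> n" for k
  proof (rule ccontr)
    assume "\<not> f k < f (last_argmax f n)"
    then have "k \<in> ?S"
      using S that by force
    then have "k \<le> last_argmax f n"
      unfolding last_argmax_def using Max_ge[OF fin] by blast
    then show False
      using that by simp
  qed
qed

lemma nonneg_has_sum_exhaustion:
  fixes f :: "'a \<Rightarrow> real"
  assumes nonneg: "\<And>x. x \<in> A \<Longrightarrow> 0 \<le> f x"
    and U: "\<And>N. finite (U N)" "\<And>N. U N \<subseteq> A" "\<And>X. finite X \<Longrightarrow> X \<subseteq> A \<Longrightarrow> \<exists>N. X \<subseteq> U N"
    and upper: "\<And>N. sum f (U N) \<le> s" and lower: "\<And>a. a < s \<Longrightarrow> \<exists>N. a < sum f (U N)"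
  shows "(f has_sum s) A"
  unfolding has_sum_def
proof (rule order_tendstoI)
  fix a
  assume "a < s"
  then obtain N where N: "a < sum f (U N)"
    using lower by blast
  have "a < sum f X" if "finite X" "U N \<subseteq> X" "X \<subseteq> A" for X
  proof -
    have "sum f (U N) \<le> sum f X"
      using that nonneg by (intro sum_mono2) auto
    then show ?thesis
      using N by linarith
  qed
  then show "eventually (\<lambda>X. a < sum f X) (finite_subsets_at_top A)"
    unfolding eventually_finite_subsets_at_top by (intro exI[of _ "U N"]) (use U in auto)
next
  fix a
  assume "s < a"
  show "eventually (\<lambda>X. sum f X < a) (finite_subsets_at_top A)"
  proof (rule eventually_finite_subsets_at_top_weakI)
    fix X
    assume X: "finite X" "X \<subseteq> A"
    then obtain N where "X \<subseteq> U N"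
      using U(3) by blast
    then have "sum f X \<le> sum f (U N)"
      by (intro sum_mono2[OF U(1)]) (use U(2) nonneg in blast)+
    then show "sum f X < a"
      using upper[of N] \<open>s < a\<close> by linarith
  qed
qed

lemma hd_append_Suc: "length xs = Suc n \<Longrightarrow> hd (xs @ ys) = hd xs"
  by (cases xs) auto

lemma last_eq_nth: "length xs = Suc n \<Longrightarrow> last xs = xs ! n"
  by (metis diff_Suc_1 last_conv_nth length_0_conv nat.distinct(1))

section \<open>Walks and their weights\<close>

definition shift :: "pt \<Rightarrow> pt \<Rightarrow> pt" where
  "shift a v = (\<lambda>i. a i + v i)"

definition negate :: "pt \<Rightarrow> pt" where
  "negate v = (\<lambda>i. - v i)"

definition reflect :: "pt \<Rightarrow> pt" where
  "reflect v = v(0 := - v 0)"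

lemma step_shift [simp]: "step a (shift a v) = v"
  and shift_step [simp]: "shift a (step a b) = b"
  and step_shift_shift [simp]: "step (shift c a) (shift c b) = step a b"
  and step_step_step [simp]: "step (step c a) (step c b) = step a b"
  and step_self [simp]: "step a a = origin"
  and step_origin_left [simp]: "step origin a = a"
  and shift_origin [simp]: "shift a origin = a"
  and step_swap: "step b a = negate (step a b)"
  and step_reflect: "step (reflect a) (reflect b) = reflect (step a b)"
  by (auto simp: step_def shift_def negate_def reflect_def origin_def)

lemma negate_negate [simp]: "negate (negate v) = v"
  and reflect_reflect [simp]: "reflect (reflect v) = v"
  and reflect_origin [simp]: "reflect origin = origin"
  by (auto simp: negate_def reflect_def origin_def)

lemma inj_shift: "inj (shift a)"
  and inj_step: "inj (step a)"
  and inj_reflect: "inj reflect"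
  by (metis injI shift_step step_shift reflect_reflect)+

lemma xc_origin [simp]: "xc origin = 0"
  and xc_step [simp]: "xc (step u v) = xc v - xc u"
  and xc_shift [simp]: "xc (shift u v) = xc u + xc v"
  and xc_reflect [simp]: "xc (reflect v) = - xc v"
  by (simp_all add: xc_def origin_def step_def shift_def reflect_def)

abbreviation steps_in :: "pt set \<Rightarrow> pt list \<Rightarrow> bool" where
  "steps_in \<Omega> \<equiv> successively (\<lambda>u v. step u v \<in> \<Omega>)"

fun step_weight :: "(pt \<Rightarrow> real) \<Rightarrow> pt list \<Rightarrow> real" where
  "step_weight \<rho> (u # v # \<gamma>) = \<rho> (step u v) * step_weight \<rho> (v # \<gamma>)"
| "step_weight \<rho> _ = 1"

definition visit_weight :: "(nat \<Rightarrow> real) \<Rightarrow> pt list \<Rightarrow> real" where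
  "visit_weight \<phi> \<gamma> = (\<Prod>v\<in>set \<gamma>. exp (- \<phi> (visits \<gamma> v)))"

lemma walks_iff: "\<gamma> \<in> walks \<Omega> n \<longleftrightarrow> length \<gamma> = Suc n \<and> hd \<gamma> = origin \<and> steps_in \<Omega> \<gamma>"
proof -
  have "length \<gamma> = Suc n \<Longrightarrow> \<gamma> ! 0 = hd \<gamma>"
    by (cases \<gamma>) auto
  moreover have "length \<gamma> = Suc n \<Longrightarrow>
      (\<forall>i\<in>{1..n}. step (\<gamma> ! (i - 1)) (\<gamma> ! i) \<in> \<Omega>) \<longleftrightarrow> steps_in \<Omega> \<gamma>"
    unfolding successively_conv_nth image_Suc_lessThan[symmetric] by auto
  ultimately show ?thesis
    by (auto simp: walks_def)
qed

lemma walks_wlen: "\<gamma> \<in> walks \<Omega> n \<Longrightarrow> wlen \<gamma> = n"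
  by (simp add: walks_iff wlen_def)

lemma walks_nth_0: "\<gamma> \<in> walks \<Omega> n \<Longrightarrow> \<gamma> ! 0 = origin"
  by (simp add: walks_def)

lemma step_weight_Cons: "xs \<noteq> [] \<Longrightarrow> step_weight \<rho> (u # xs) = \<rho> (step u (hd xs)) * step_weight \<rho> xs"
  by (cases xs) simp_all

lemma step_weight_append:
  "xs \<noteq> [] \<Longrightarrow> ys \<noteq> [] \<Longrightarrow>
    step_weight \<rho> (xs @ ys) = step_weight \<rho> xs * \<rho> (step (last xs) (hd ys)) * step_weight \<rho> ys"
  by (induction xs rule: induct_list012) (simp_all add: step_weight_Cons)

lemma step_weight_eq_prod: "step_weight \<rho> \<gamma> = (\<Prod>i<wlen \<gamma>. \<rho> (step (\<gamma> ! i) (\<gamma> ! Suc i)))"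
proof (induction \<rho> \<gamma> rule: step_weight.induct)
  case (1 \<rho> u v \<gamma>)
  then show ?case
    by (simp add: wlen_def prod.lessThan_Suc_shift del: prod.lessThan_Suc)
qed (simp_all add: wlen_def)

lemma sigma_eq: "sigma \<rho> \<phi> \<gamma> = visit_weight \<phi> \<gamma> * step_weight \<rho> \<gamma>"
proof -
  have "(\<Prod>i\<in>{1..wlen \<gamma>}. \<rho> (step (\<gamma> ! (i - 1)) (\<gamma> ! i))) = step_weight \<rho> \<gamma>"
    unfolding step_weight_eq_prod image_Suc_lessThan[symmetric] by (simp add: prod.reindex)
  then show ?thesis
    by (simp add: sigma_def visit_weight_def)
qed

lemma step_weight_map:
  assumes "\<And>u v. \<rho> (step (f u) (f v)) = \<rho>' (step u v)"
  shows "step_weight \<rho> (map f \<gamma>) = step_weight \<rho>' \<gamma>"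
  by (induction \<gamma> rule: induct_list012) (simp_all add: assms)

lemma step_weight_rev:
  assumes "\<And>w. \<rho>' w = \<rho> (negate w)"
  shows "step_weight \<rho> (rev \<gamma>) = step_weight \<rho>' \<gamma>"
proof (induction \<gamma>)
  case (Cons u \<gamma>)
  show ?case
  proof (cases \<gamma>)
    case (Cons v \<gamma>')
    have "step_weight \<rho> (rev (u # \<gamma>)) = step_weight \<rho> (rev \<gamma>) * \<rho> (step v u)"
      using step_weight_append[of "rev \<gamma>" "[u]" \<rho>] Cons by simp
    also have "\<rho> (step v u) = \<rho>' (step u v)"
      by (simp add: assms step_swap[of u v])
    finally show ?thesis
      using Cons.IH \<open>\<gamma> = v # \<gamma>'\<close> by (simp add: mult.commute)
  qed simp
qed simp

lemma step_weight_cong: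
  "steps_in \<Omega> \<gamma> \<Longrightarrow> (\<And>w. w \<in> \<Omega> \<Longrightarrow> \<rho> w = \<rho>' w) \<Longrightarrow> step_weight \<rho> \<gamma> = step_weight \<rho>' \<gamma>"
  by (induction \<rho> \<gamma> rule: step_weight.induct) simp_all

lemma step_weight_nonneg:
  "steps_in \<Omega> \<gamma> \<Longrightarrow> (\<And>w. w \<in> \<Omega> \<Longrightarrow> \<rho> w \<ge> 0) \<Longrightarrow> step_weight \<rho> \<gamma> \<ge> 0"
  by (induction \<rho> \<gamma> rule: step_weight.induct) simp_all

lemma visits_append: "visits (xs @ ys) v = visits xs v + visits ys v"
  by (simp add: visits_def)

lemma visits_eq_0: "v \<notin> set xs \<Longrightarrow> visits xs v = 0"
  by (induction xs) (auto simp: visits_def)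

lemma visit_weight_pos: "visit_weight \<phi> \<gamma> > 0"
  by (simp add: visit_weight_def prod_pos)

lemma visit_weight_superset:
  assumes "\<phi> 0 = 0" "finite U" "set \<gamma> \<subseteq> U"
  shows "visit_weight \<phi> \<gamma> = (\<Prod>v\<in>U. exp (- \<phi> (visits \<gamma> v)))"
  unfolding visit_weight_def
  by (rule prod.mono_neutral_left) (use assms in \<open>auto simp: visits_eq_0\<close>)

lemma visit_weight_append_le:
  assumes "\<phi> 0 = 0" and superadd: "\<And>a b. \<phi> a + \<phi> b \<le> \<phi> (a + b)"
  shows "visit_weight \<phi> (xs @ ys) \<le> visit_weight \<phi> xs * visit_weight \<phi> ys"
proof -
  let ?U = "set xs \<union> set ys"
  have "visit_weight \<phi> (xs @ ys) = (\<Prod>v\<in>?U. exp (- \<phi> (visits xs v + visits ys v)))"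
    using visit_weight_superset[of \<phi> ?U "xs @ ys"] assms by (simp add: visits_append)
  also have "\<dots> \<le> (\<Prod>v\<in>?U. exp (- \<phi> (visits xs v)) * exp (- \<phi> (visits ys v)))"
  proof (rule prod_mono)
    fix v
    have "\<phi> (visits xs v) + \<phi> (visits ys v) \<le> \<phi> (visits xs v + visits ys v)"
      by (rule superadd)
    then show "0 \<le> exp (- \<phi> (visits xs v + visits ys v)) \<and>
        exp (- \<phi> (visits xs v + visits ys v)) \<le> exp (- \<phi> (visits xs v)) * exp (- \<phi> (visits ys v))"
      by (simp flip: exp_add)
  qed
  also have "\<dots> = visit_weight \<phi> xs * visit_weight \<phi> ys"
    using visit_weight_superset[of \<phi> ?U] assms by (simp add: prod.distrib)
  finally show ?thesis .
qed

lemma visit_weight_append_disjoint: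
  assumes "\<phi> 0 = 0" "set xs \<inter> set ys = {}"
  shows "visit_weight \<phi> (xs @ ys) = visit_weight \<phi> xs * visit_weight \<phi> ys"
proof -
  let ?U = "set xs \<union> set ys"
  have "visit_weight \<phi> (xs @ ys) = (\<Prod>v\<in>?U. exp (- \<phi> (visits xs v + visits ys v)))"
    using visit_weight_superset[of \<phi> ?U "xs @ ys"] assms by (simp add: visits_append)
  also have "\<dots> = (\<Prod>v\<in>?U. exp (- \<phi> (visits xs v)) * exp (- \<phi> (visits ys v)))"
  proof (rule prod.cong)
    fix v
    have "v \<notin> set xs \<or> v \<notin> set ys"
      using assms(2) by blast
    then have "visits xs v = 0 \<or> visits ys v = 0"
      using visits_eq_0 by metis
    then show "exp (- \<phi> (visits xs v + visits ys v))
        = exp (- \<phi> (visits xs v)) * exp (- \<phi> (visits ys v))"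
      using assms(1) by auto
  qed simp
  also have "\<dots> = visit_weight \<phi> xs * visit_weight \<phi> ys"
    using visit_weight_superset[of \<phi> ?U] assms by (simp add: prod.distrib)
  finally show ?thesis .
qed

lemma visit_weight_singleton: "\<phi> 1 = 0 \<Longrightarrow> visit_weight \<phi> [a] = 1"
  by (simp add: visit_weight_def visits_def)

lemma visits_distinct: "distinct xs \<Longrightarrow> v \<in> set xs \<Longrightarrow> visits xs v = 1"
  by (induction xs) (auto simp: visits_def filter_empty_conv)

lemma visit_weight_distinct: "\<phi> 1 = 0 \<Longrightarrow> distinct \<gamma> \<Longrightarrow> visit_weight \<phi> \<gamma> = 1"
  by (simp add: visit_weight_def visits_distinct)

lemma visit_weight_map_inj: "inj f \<Longrightarrow> visit_weight \<phi> (map f \<gamma>) = visit_weight \<phi> \<gamma>"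
proof -
  assume f: "inj f"
  have "visits (map f \<gamma>) (f v) = visits \<gamma> v" for v
    using f by (induction \<gamma>) (auto simp: visits_def inj_eq)
  then show ?thesis
    using f by (simp add: visit_weight_def prod.reindex inj_on_subset)
qed

lemma visit_weight_rev: "visit_weight \<phi> (rev \<gamma>) = visit_weight \<phi> \<gamma>"
proof -
  have "visits (rev \<gamma>) v = visits \<gamma> v" for v
    by (simp add: visits_def flip: rev_filter)
  then show ?thesis
    by (simp add: visit_weight_def)
qed

lemma sigma_map:
  assumes g: "\<And>v. v \<in> \<Omega> \<Longrightarrow> g v \<in> \<Omega> \<and> \<rho> (g v) = \<rho> v"
    and f: "\<And>u v. step (f u) (f v) = g (step u v)" "inj f"
    and \<gamma>: "steps_in \<Omega> \<gamma>"
  shows "steps_in \<Omega> (map f \<gamma>)" and "sigma \<rho> \<phi> (map f \<gamma>) = sigma \<rho> \<phi> \<gamma>"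
proof -
  show "steps_in \<Omega> (map f \<gamma>)"
    unfolding successively_map f(1) using \<gamma> by (rule successively_mono) (use g in blast)
  have "step_weight \<rho> (map f \<gamma>) = step_weight (\<lambda>w. \<rho> (g w)) \<gamma>"
    by (rule step_weight_map) (simp add: f(1))
  also have "\<dots> = step_weight \<rho> \<gamma>"
    using \<gamma> g by (intro step_weight_cong) auto
  finally show "sigma \<rho> \<phi> (map f \<gamma>) = sigma \<rho> \<phi> \<gamma>"
    by (simp add: sigma_eq visit_weight_map_inj[OF f(2)])
qed

lemma sigma_rev:
  assumes neg: "\<And>v. v \<in> \<Omega> \<Longrightarrow> negate v \<in> \<Omega> \<and> \<rho> (negate v) = \<rho> v"
    and \<gamma>: "steps_in \<Omega> \<gamma>"
  shows "steps_in \<Omega> (rev \<gamma>)" and "sigma \<rho> \<phi> (rev \<gamma>) = sigma \<rho> \<phi> \<gamma>"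
proof -
  show "steps_in \<Omega> (rev \<gamma>)"
    unfolding successively_rev using \<gamma> by (rule successively_mono) (use neg step_swap in metis)
  have "step_weight \<rho> (rev \<gamma>) = step_weight (\<lambda>w. \<rho> (negate w)) \<gamma>"
    by (rule step_weight_rev) simp
  also have "\<dots> = step_weight \<rho> \<gamma>"
    using \<gamma> neg by (intro step_weight_cong) auto
  finally show "sigma \<rho> \<phi> (rev \<gamma>) = sigma \<rho> \<phi> \<gamma>"
    by (simp add: sigma_eq visit_weight_rev)
qed

lemma steps_in_map_step: "steps_in \<Omega> (map (step c) \<gamma>) \<longleftrightarrow> steps_in \<Omega> \<gamma>"
  and steps_in_map_shift: "steps_in \<Omega> (map (shift c) \<gamma>) \<longleftrightarrow> steps_in \<Omega> \<gamma>"
  by (simp_all add: successively_map)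

lemma finite_walks:
  assumes "finite \<Omega>"
  shows "finite (walks \<Omega> n)"
proof (induction n)
  case 0
  have "walks \<Omega> 0 \<subseteq> {[origin]}"
    by (auto simp: walks_iff length_Suc_conv)
  then show ?case
    by (rule finite_subset) simp
next
  case (Suc n)
  have "walks \<Omega> (Suc n) \<subseteq> (\<lambda>(\<gamma>, v). \<gamma> @ [shift (last \<gamma>) v]) ` (walks \<Omega> n \<times> \<Omega>)"
  proof
    fix \<gamma>
    assume "\<gamma> \<in> walks \<Omega> (Suc n)"
    moreover obtain \<beta> u where \<gamma>: "\<gamma> = \<beta> @ [u]"
      by (cases \<gamma> rule: rev_cases) (use calculation in \<open>auto simp: walks_iff\<close>)
    ultimately have "length \<beta> = Suc n" "hd \<beta> = origin" "steps_in \<Omega> (\<beta> @ [u])"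
      by (auto simp: walks_iff hd_append_Suc)
    then have "\<beta> \<in> walks \<Omega> n" "step (last \<beta>) u \<in> \<Omega>"
      by (auto simp: walks_iff successively_append_iff)
    then show "\<gamma> \<in> (\<lambda>(\<gamma>, v). \<gamma> @ [shift (last \<gamma>) v]) ` (walks \<Omega> n \<times> \<Omega>)"
      using \<gamma>(1) by (intro image_eqI[of _ _ "(\<beta>, step (last \<beta>) u)"]) auto
  qed
  then show ?case
    by (rule finite_subset) (use Suc assms in auto)
qed

lemma step_origin: "step c origin = negate c"
  by (simp add: step_def negate_def origin_def)

section \<open>Cutting and joining walks\<close>

definition walk_prefix :: "nat \<Rightarrow> pt list \<Rightarrow> pt list" where
  "walk_prefix t \<gamma> = take (Suc t) \<gamma>"

definition walk_suffix :: "nat \<Rightarrow> pt list \<Rightarrow> pt list" where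
  "walk_suffix t \<gamma> = map (step (\<gamma> ! t)) (drop t \<gamma>)"

definition join :: "pt list \<Rightarrow> pt list \<Rightarrow> pt list" where
  "join \<beta> \<eta> = \<beta> @ map (shift (last \<beta>)) (tl \<eta>)"

lemma walk_prefix_walks: "\<gamma> \<in> walks \<Omega> n \<Longrightarrow> t \<le> n \<Longrightarrow> walk_prefix t \<gamma> \<in> walks \<Omega> t"
  by (auto simp: walks_iff walk_prefix_def successively_conv_nth)

lemma walk_suffix_walks:
  assumes "\<gamma> \<in> walks \<Omega> n" "t \<le> n"
  shows "walk_suffix t \<gamma> \<in> walks \<Omega> (n - t)"
proof -
  have "drop t \<gamma> = \<gamma> ! t # drop (Suc t) \<gamma>"
    using assms by (simp add: walks_iff Cons_nth_drop_Suc)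
  then have "hd (walk_suffix t \<gamma>) = origin"
    by (simp add: walk_suffix_def)
  then show ?thesis
    using assms by (auto simp: walks_iff walk_suffix_def successively_map successively_conv_nth
        add.commute[of _ t])
qed

lemma walk_prefix_nth: "i \<le> t \<Longrightarrow> walk_prefix t \<gamma> ! i = \<gamma> ! i"
  by (simp add: walk_prefix_def)

lemma walk_suffix_nth: "t + i < length \<gamma> \<Longrightarrow> walk_suffix t \<gamma> ! i = step (\<gamma> ! t) (\<gamma> ! (t + i))"
  by (simp add: walk_suffix_def)

lemma length_join: "\<beta> \<in> walks \<Omega> j \<Longrightarrow> \<eta> \<in> walks \<Omega> m \<Longrightarrow> length (join \<beta> \<eta>) = Suc (j + m)"
  by (simp add: join_def walks_iff)

lemma join_nth_le: "\<beta> \<in> walks \<Omega> j \<Longrightarrow> i \<le> j \<Longrightarrow> join \<beta> \<eta> ! i = \<beta> ! i"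
  by (simp add: join_def walks_iff nth_append)

lemma join_nth_ge:
  assumes "\<beta> \<in> walks \<Omega> j" "\<eta> \<in> walks \<Omega> m" "j \<le> i" "i \<le> j + m"
  shows "join \<beta> \<eta> ! i = shift (\<beta> ! j) (\<eta> ! (i - j))"
proof (cases "i = j")
  case True
  then show ?thesis
    using join_nth_le[OF assms(1), of i] walks_nth_0[OF assms(2)] by simp
next
  case False
  then show ?thesis
    using assms by (auto simp: join_def walks_iff nth_append nth_tl last_eq_nth Suc_diff_Suc)
qed

lemma join_walks:
  assumes "\<beta> \<in> walks \<Omega> j" "\<eta> \<in> walks \<Omega> m"
  shows "join \<beta> \<eta> \<in> walks \<Omega> (j + m)"
proof -
  obtain \<eta>' where \<eta>: "\<eta> = origin # \<eta>'"
    using assms(2) by (cases \<eta>) (auto simp: walks_iff)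
  have "steps_in \<Omega> (map (shift (last \<beta>)) \<eta>)"
    using assms(2) by (simp add: walks_iff successively_map)
  then have "steps_in \<Omega> (last \<beta> # map (shift (last \<beta>)) \<eta>')"
    by (simp add: \<eta>)
  then have "steps_in \<Omega> (\<beta> @ map (shift (last \<beta>)) \<eta>')"
    using assms(1) by (auto simp: walks_iff successively_append_iff successively_Cons)
  moreover have "hd (\<beta> @ map (shift (last \<beta>)) \<eta>') = origin"
    using assms(1) by (auto simp: walks_iff hd_append_Suc)
  ultimately show ?thesis
    using assms by (simp add: walks_iff join_def length_join \<eta>)
qed

lemma walk_prefix_join: "\<beta> \<in> walks \<Omega> j \<Longrightarrow> walk_prefix j (join \<beta> \<eta>) = \<beta>"
  by (simp add: walk_prefix_def join_def walks_iff)

lemma walk_suffix_join: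
  assumes "\<beta> \<in> walks \<Omega> j" "\<eta> \<in> walks \<Omega> m"
  shows "walk_suffix j (join \<beta> \<eta>) = \<eta>"
proof -
  have "drop j \<beta> = [last \<beta>]"
    using assms(1) Cons_nth_drop_Suc[of j \<beta>] by (simp add: walks_iff last_eq_nth)
  moreover obtain \<eta>' where "\<eta> = origin # \<eta>'"
    using assms(2) by (cases \<eta>) (auto simp: walks_iff)
  ultimately have "drop j (join \<beta> \<eta>) = map (shift (last \<beta>)) \<eta>"
    using assms(1) by (simp add: join_def walks_iff)
  moreover have "join \<beta> \<eta> ! j = last \<beta>"
    using assms join_nth_le[OF assms(1), of j] by (simp add: walks_iff last_eq_nth)
  ultimately show ?thesis
    by (simp add: walk_suffix_def comp_def)
qed

lemma join_walk_prefix_suffix: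
  assumes "\<gamma> \<in> walks \<Omega> n" "t \<le> n"
  shows "join (walk_prefix t \<gamma>) (walk_suffix t \<gamma>) = \<gamma>"
proof -
  have "last (walk_prefix t \<gamma>) = \<gamma> ! t"
    using assms by (simp add: walk_prefix_def walks_iff take_Suc_conv_app_nth)
  moreover have "map (shift (\<gamma> ! t)) (tl (walk_suffix t \<gamma>)) = drop (Suc t) \<gamma>"
    by (simp add: walk_suffix_def map_tl comp_def drop_Suc tl_drop)
  ultimately show ?thesis
    by (simp add: join_def walk_prefix_def)
qed

lemma inj_on_join: "inj_on (\<lambda>(\<beta>, \<eta>). join \<beta> \<eta>) (walks \<Omega> j \<times> walks \<Omega> m)"
  by (rule inj_on_inverseI[of _ "\<lambda>\<gamma>. (walk_prefix j \<gamma>, walk_suffix j \<gamma>)"])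
    (auto simp: walk_prefix_join walk_suffix_join)

section \<open>The polymer model\<close>

locale polymer_model =
  fixes d :: nat and \<Omega> :: "pt set" and \<rho> :: "pt \<Rightarrow> real" and \<phi> :: "nat \<Rightarrow> real"
  assumes d_pos: "1 \<le> d"
    and finite_steps: "finite \<Omega>" and steps_in_Zd: "\<And>v. v \<in> \<Omega> \<Longrightarrow> in_Zd d v"
    and origin_not_step: "origin \<notin> \<Omega>"
    and steps_symmetric: "\<And>g. sym_Zd d g \<Longrightarrow> g ` \<Omega> = \<Omega>"
    and phi_0: "\<phi> 0 = 0" and phi_1: "\<phi> 1 = 0"
    and phi_superadditive: "\<And>a b. \<phi> a + \<phi> b \<le> \<phi> (a + b)"
    and rho_nonneg: "\<And>v. v \<in> \<Omega> \<Longrightarrow> 0 \<le> \<rho> v" and rho_sum: "(\<Sum>v\<in>\<Omega>. \<rho> v) = 1"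
    and rho_symmetric: "\<And>g v. sym_Zd d g \<Longrightarrow> v \<in> \<Omega> \<Longrightarrow> \<rho> (g v) = \<rho> v"
begin

lemma signed_permutation_step:
  assumes "bij_betw \<pi> {..<d} {..<d}" "\<forall>i. s i \<in> {1, -1::int}"
    and g: "\<And>i. i < d \<Longrightarrow> g v i = s i * v (\<pi> i)" "\<And>i. d \<le> i \<Longrightarrow> g v i = 0"
    and v: "v \<in> \<Omega>"
  shows "g v \<in> \<Omega> \<and> \<rho> (g v) = \<rho> v"
proof -
  define G where "G = (\<lambda>w i. if i < d then s i * w (\<pi> i) else 0)"
  have G: "sym_Zd d G"
    unfolding sym_Zd_def G_def using assms(1,2) by blast
  have "g v = G v"
    using g by (auto simp: G_def fun_eq_iff not_less)
  then show ?thesis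
    using steps_symmetric[OF G] rho_symmetric[OF G v] v by auto
qed

lemma reflect_step: "v \<in> \<Omega> \<Longrightarrow> reflect v \<in> \<Omega> \<and> \<rho> (reflect v) = \<rho> v"
  using d_pos steps_in_Zd[of v]
  by (intro signed_permutation_step[of id "\<lambda>i. if i = 0 then -1 else 1"])
    (auto simp: reflect_def in_Zd_def)

lemma negate_step: "v \<in> \<Omega> \<Longrightarrow> negate v \<in> \<Omega> \<and> \<rho> (negate v) = \<rho> v"
  using steps_in_Zd[of v]
  by (intro signed_permutation_step[of id "\<lambda>i. -1"]) (auto simp: negate_def in_Zd_def)

lemma forward_step: "\<exists>e\<in>\<Omega>. 0 < xc e \<and> 0 < \<rho> e"
proof -
  obtain v where v: "v \<in> \<Omega>" "0 < \<rho> v"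
  proof (rule ccontr)
    assume "\<not> thesis"
    then have "\<forall>v\<in>\<Omega>. \<rho> v = 0"
      using rho_nonneg that by force
    then show False
      using rho_sum by simp
  qed
  obtain j where j: "j < d" "v j \<noteq> 0"
  proof (rule ccontr)
    assume "\<not> thesis"
    then have "\<forall>i. v i = 0"
      using steps_in_Zd[OF v(1)] that unfolding in_Zd_def by (meson not_le)
    then have "v = origin"
      by (auto simp: origin_def)
    then show False
      using origin_not_step v(1) by simp
  qed
  define \<pi> where "\<pi> = (\<lambda>i::nat. if i = 0 then j else if i = j then 0 else i)"
  define s where "s = (\<lambda>i::nat. if i = 0 \<and> v j < 0 then -1 else (1::int))"
  define e where "e = (\<lambda>i. if i < d then s i * v (\<pi> i) else 0)"
  have "\<pi> \<circ> \<pi> = id" "\<pi> ` {..<d} \<subseteq> {..<d}"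
    using j by (auto simp: \<pi>_def fun_eq_iff)
  then have "bij_betw \<pi> {..<d} {..<d}"
    by (intro bij_betw_byWitness[where f'=\<pi>]) (auto simp: fun_eq_iff)
  then have "e \<in> \<Omega> \<and> \<rho> e = \<rho> v"
    by (intro signed_permutation_step[of \<pi> s]) (auto simp: e_def s_def v(1))
  moreover have "0 < xc e"
    using d_pos j by (auto simp: e_def xc_def s_def \<pi>_def)
  ultimately show ?thesis
    using v(2) by auto
qed

lemma rho_le_1: "v \<in> \<Omega> \<Longrightarrow> \<rho> v \<le> 1"
  using member_le_sum[of v \<Omega> \<rho>] rho_nonneg rho_sum finite_steps by auto

lemma sigma_nonneg: "steps_in \<Omega> \<gamma> \<Longrightarrow> 0 \<le> sigma \<rho> \<phi> \<gamma>"
  using step_weight_nonneg[of \<Omega> \<gamma> \<rho>] rho_nonneg visit_weight_pos[of \<phi> \<gamma>] by (simp add: sigma_eq)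

lemma sigma_walk_nonneg: "\<gamma> \<in> walks \<Omega> n \<Longrightarrow> 0 \<le> sigma \<rho> \<phi> \<gamma>"
  by (simp add: walks_iff sigma_nonneg)

lemma sigma_append_le:
  assumes "xs \<noteq> []" "ys \<noteq> []" "steps_in \<Omega> (xs @ ys)"
  shows "sigma \<rho> \<phi> (xs @ ys) \<le> sigma \<rho> \<phi> xs * \<rho> (step (last xs) (hd ys)) * sigma \<rho> \<phi> ys"
proof -
  let ?s = "step_weight \<rho> xs * \<rho> (step (last xs) (hd ys)) * step_weight \<rho> ys"
  have "0 \<le> ?s"
    using assms step_weight_nonneg[of \<Omega> _ \<rho>] rho_nonneg
    by (auto simp: successively_append_iff intro!: mult_nonneg_nonneg)
  then have "visit_weight \<phi> (xs @ ys) * ?s \<le> (visit_weight \<phi> xs * visit_weight \<phi> ys) * ?s"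
    using visit_weight_append_le[of \<phi>, OF phi_0 phi_superadditive]
    by (rule mult_right_mono[rotated])
  then show ?thesis
    using assms by (simp add: sigma_eq step_weight_append algebra_simps)
qed

lemma sigma_append_disjoint:
  assumes "xs \<noteq> []" "ys \<noteq> []" "set xs \<inter> set ys = {}"
  shows "sigma \<rho> \<phi> (xs @ ys) = sigma \<rho> \<phi> xs * \<rho> (step (last xs) (hd ys)) * sigma \<rho> \<phi> ys"
  using assms
  by (simp add: sigma_eq step_weight_append visit_weight_append_disjoint[of \<phi>, OF phi_0])

lemma sigma_Cons_notin:
  assumes "xs \<noteq> []" "a \<notin> set xs"
  shows "sigma \<rho> \<phi> (a # xs) = \<rho> (step a (hd xs)) * sigma \<rho> \<phi> xs"
  using sigma_append_disjoint[of "[a]" xs] assms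
  by (simp add: sigma_eq visit_weight_singleton[of \<phi>, OF phi_1])

lemma sigma_shift:
  "steps_in \<Omega> \<gamma> \<Longrightarrow> sigma \<rho> \<phi> (map (shift c) \<gamma>) = sigma \<rho> \<phi> \<gamma>"
  "steps_in \<Omega> \<gamma> \<Longrightarrow> sigma \<rho> \<phi> (map (step c) \<gamma>) = sigma \<rho> \<phi> \<gamma>"
  by (rule sigma_map[of \<Omega> id], auto simp: inj_shift inj_step)+

definition weight :: "pt list set \<Rightarrow> real" where
  "weight A = (\<Sum>\<gamma>\<in>A. sigma \<rho> \<phi> \<gamma>)"

abbreviation Z :: "nat \<Rightarrow> real" where
  "Z n \<equiv> Zn \<Omega> \<rho> \<phi> n"

lemma Z_eq_weight: "Z n = weight (walks \<Omega> n)"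
  by (simp add: Zn_def weight_def)

lemma weight_nonneg: "(\<And>\<gamma>. \<gamma> \<in> A \<Longrightarrow> steps_in \<Omega> \<gamma>) \<Longrightarrow> 0 \<le> weight A"
  unfolding weight_def by (intro sum_nonneg sigma_nonneg)

lemma weight_mono:
  "finite B \<Longrightarrow> A \<subseteq> B \<Longrightarrow> (\<And>\<gamma>. \<gamma> \<in> B \<Longrightarrow> steps_in \<Omega> \<gamma>) \<Longrightarrow> weight A \<le> weight B"
  unfolding weight_def by (intro sum_mono2) (auto intro: sigma_nonneg)

lemma weight_walks_subset:
  "A \<subseteq> walks \<Omega> n \<Longrightarrow> weight A \<le> Z n"
  unfolding Z_eq_weight by (intro weight_mono finite_walks[OF finite_steps]) (auto simp: walks_iff)

definition straight_walk :: "pt \<Rightarrow> nat \<Rightarrow> pt list" where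
  "straight_walk e n = map (\<lambda>k i. int k * e i) [0..<Suc n]"

lemma straight_walk:
  assumes e: "e \<in> \<Omega>" "0 < xc e"
  shows "straight_walk e n \<in> walks \<Omega> n" and "sigma \<rho> \<phi> (straight_walk e n) = \<rho> e ^ n"
proof -
  have step_e: "step (\<lambda>i. int k * e i) (\<lambda>i. (1 + int k) * e i) = e" for k
    by (auto simp: step_def algebra_simps)
  have "steps_in \<Omega> (straight_walk e n) \<and> step_weight \<rho> (straight_walk e n) = \<rho> e ^ n"
  proof (induction n)
    case (Suc n)
    have "straight_walk e (Suc n) = straight_walk e n @ [\<lambda>i. int (Suc n) * e i]"
      and "last (straight_walk e n) = (\<lambda>i. int n * e i)" "straight_walk e n \<noteq> []"
      by (simp_all add: straight_walk_def)
    then show ?case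
      using Suc e by (simp add: successively_append_iff step_weight_append step_e)
  qed (simp add: straight_walk_def)
  moreover have "hd (straight_walk e n) = origin"
    by (simp add: straight_walk_def origin_def hd_map upt_conv_Cons del: upt_Suc)
  ultimately show "straight_walk e n \<in> walks \<Omega> n"
    by (simp add: walks_iff straight_walk_def)
  have "inj_on (\<lambda>k i. int k * e i) {0..<Suc n}"
    using e(2) by (intro inj_onI) (metis xc_def mult_cancel_right of_nat_eq_iff less_irrefl)
  then have "distinct (straight_walk e n)"
    by (simp add: straight_walk_def distinct_map del: upt_Suc)
  then show "sigma \<rho> \<phi> (straight_walk e n) = \<rho> e ^ n"
    using \<open>steps_in \<Omega> (straight_walk e n) \<and> _\<close>
    by (simp add: sigma_eq visit_weight_distinct[of \<phi>, OF phi_1])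
qed

lemma Z_ge_power: "e \<in> \<Omega> \<Longrightarrow> 0 < xc e \<Longrightarrow> \<rho> e ^ n \<le> Z n"
  using weight_walks_subset[of "{straight_walk e n}" n] straight_walk[of e n]
  by (simp add: weight_def)

lemma Z_pos: "0 < Z n"
proof -
  obtain e where "e \<in> \<Omega>" "0 < xc e" "0 < \<rho> e"
    using forward_step by blast
  then show ?thesis
    using Z_ge_power[of e n] by (meson less_le_trans zero_less_power)
qed

lemma sigma_split_at_step:
  assumes "\<gamma> \<in> walks \<Omega> (n + m + 1)"
  shows "sigma \<rho> \<phi> \<gamma> \<le> sigma \<rho> \<phi> (walk_prefix n \<gamma>) * \<rho> (step (\<gamma> ! n) (\<gamma> ! Suc n))
    * sigma \<rho> \<phi> (walk_suffix (Suc n) \<gamma>)"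
proof -
  have l: "length \<gamma> = n + m + 2" "steps_in \<Omega> \<gamma>"
    using assms by (auto simp: walks_iff)
  have "sigma \<rho> \<phi> (take (Suc n) \<gamma> @ drop (Suc n) \<gamma>)
      \<le> sigma \<rho> \<phi> (take (Suc n) \<gamma>) * \<rho> (step (last (take (Suc n) \<gamma>)) (hd (drop (Suc n) \<gamma>)))
        * sigma \<rho> \<phi> (drop (Suc n) \<gamma>)"
    using l by (intro sigma_append_le) auto
  moreover have "sigma \<rho> \<phi> (walk_suffix (Suc n) \<gamma>) = sigma \<rho> \<phi> (drop (Suc n) \<gamma>)"
    unfolding walk_suffix_def using l(2) by (intro sigma_shift) (simp add: successively_conv_nth)
  ultimately show ?thesis
    using l by (simp add: walk_prefix_def last_eq_nth hd_drop_conv_nth)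
qed

lemma Z_submultiplicative: "Z (n + m + 1) \<le> Z n * Z m"
proof -
  let ?h = "\<lambda>\<gamma>. (walk_prefix n \<gamma>, step (\<gamma> ! n) (\<gamma> ! Suc n), walk_suffix (Suc n) \<gamma>)"
  let ?g = "\<lambda>(\<alpha>, s, \<beta>). \<alpha> @ map (shift (shift (last \<alpha>) s)) \<beta>"
  let ?F = "\<lambda>(\<alpha>, s, \<beta>). sigma \<rho> \<phi> \<alpha> * (\<rho> s * sigma \<rho> \<phi> \<beta>)"
  have "Z (n + m + 1) \<le> (\<Sum>p\<in>walks \<Omega> n \<times> (\<Omega> \<times> walks \<Omega> m). ?F p)"
    unfolding Z_eq_weight weight_def
  proof (rule sum_le_sum_inj_on)
    show "inj_on ?h (walks \<Omega> (n + m + 1))"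
    proof (rule inj_on_inverseI)
      fix \<gamma>
      assume "\<gamma> \<in> walks \<Omega> (n + m + 1)"
      then have "last (walk_prefix n \<gamma>) = \<gamma> ! n"
        by (auto simp: walks_iff walk_prefix_def last_eq_nth)
      moreover have "map (shift (\<gamma> ! Suc n)) (walk_suffix (Suc n) \<gamma>) = drop (Suc n) \<gamma>"
        by (simp add: walk_suffix_def comp_def)
      ultimately show "?g (?h \<gamma>) = \<gamma>"
        by (simp add: walk_prefix_def)
    qed
    show "?h ` walks \<Omega> (n + m + 1) \<subseteq> walks \<Omega> n \<times> (\<Omega> \<times> walks \<Omega> m)"
    proof (rule image_subsetI)
      fix \<gamma>
      assume \<gamma>: "\<gamma> \<in> walks \<Omega> (n + m + 1)"
      have "step (\<gamma> ! n) (\<gamma> ! Suc n) \<in> \<Omega>"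
        using \<gamma> by (intro successively_nth[where P="\<lambda>u v. step u v \<in> \<Omega>"]) (auto simp: walks_iff)
      then show "?h \<gamma> \<in> walks \<Omega> n \<times> (\<Omega> \<times> walks \<Omega> m)"
        using walk_prefix_walks[OF \<gamma>, of n] walk_suffix_walks[OF \<gamma>, of "Suc n"] by simp
    qed
    show "sigma \<rho> \<phi> \<gamma> \<le> ?F (?h \<gamma>)" if "\<gamma> \<in> walks \<Omega> (n + m + 1)" for \<gamma>
      using sigma_split_at_step[OF that] by (simp add: mult.assoc)
    show "0 \<le> ?F p" if "p \<in> walks \<Omega> n \<times> (\<Omega> \<times> walks \<Omega> m)" for p
      using that sigma_walk_nonneg rho_nonneg by auto
  qed (simp add: finite_walks[OF finite_steps] finite_steps)
  also have "\<dots> = Z n * ((\<Sum>v\<in>\<Omega>. \<rho> v) * Z m)"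
    by (simp add: Z_eq_weight weight_def sum_product sum.cartesian_product case_prod_beta)
  finally show ?thesis
    using rho_sum by simp
qed

lemma ln_Z_subadditive:
  assumes "1 \<le> k" "1 \<le> l"
  shows "ln (Z (k + l - 1)) \<le> ln (Z (k - 1)) + ln (Z (l - 1))"
proof -
  have "k + l - 1 = (k - 1) + (l - 1) + 1"
    using assms by simp
  then have "Z (k + l - 1) \<le> Z (k - 1) * Z (l - 1)"
    using Z_submultiplicative by metis
  then show ?thesis
    using Z_pos[of "k - 1"] Z_pos[of "l - 1"] Z_pos[of "k + l - 1"]
    by (simp add: ln_mult flip: ln_le_cancel_iff)
qed

lemma ln_Z_ge:
  assumes e: "e \<in> \<Omega>" "0 < xc e" "0 < \<rho> e" and "1 \<le> k"
  shows "ln (\<rho> e) * k \<le> ln (Z (k - 1))"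
proof -
  have "ln (\<rho> e) * k \<le> ln (\<rho> e) * (k - 1)"
    using rho_le_1[OF e(1)] e(3) assms(4) by (intro mult_left_mono_neg) auto
  also have "\<dots> = ln (\<rho> e ^ (k - 1))"
    using e(3) assms(4) by (simp add: ln_realpow of_nat_diff)
  also have "\<dots> \<le> ln (Z (k - 1))"
    using Z_ge_power[OF e(1,2)] e(3) Z_pos by simp
  finally show ?thesis .
qed

lemma lambda0:
  shows "(\<lambda>n. ln (Z n) / n) \<longlonglongrightarrow> lambda0 \<Omega> \<rho> \<phi>" and "exp (lambda0 \<Omega> \<rho> \<phi> * (real n + 1)) \<le> Z n"
proof -
  obtain e where e: "e \<in> \<Omega>" "0 < xc e" "0 < \<rho> e"
    using forward_step by blast
  define a where "a k = ln (Z (k - 1))" for k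
  define L where "L = Inf ((\<lambda>k. a k / k) ` {1..})"
  have "\<And>k l. 1 \<le> k \<Longrightarrow> 1 \<le> l \<Longrightarrow> a (k + l) \<le> a k + a l"
    "\<And>k. 1 \<le> k \<Longrightarrow> ln (\<rho> e) * k \<le> a k"
    unfolding a_def by (rule ln_Z_subadditive ln_Z_ge[OF e], assumption+)+
  note F = fekete[of a "ln (\<rho> e)", folded L_def, OF this]
  have eq: "ln (Z n) / n = a (Suc n) / (Suc n) * (real (Suc n) / n)" for n
    by (cases "n = 0") (auto simp: a_def)
  have "(\<lambda>n. a (Suc n) / (Suc n) * (real (Suc n) / n)) \<longlonglongrightarrow> L * 1"
    using tendsto_mult[OF LIMSEQ_Suc[OF F(1)] LIMSEQ_Suc_n_over_n] .
  then have "(\<lambda>n. ln (Z n) / n) \<longlonglongrightarrow> L"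
    unfolding eq by simp
  moreover from this have "lambda0 \<Omega> \<rho> \<phi> = L"
    unfolding lambda0_def by (rule limI)
  ultimately show "(\<lambda>n. ln (Z n) / n) \<longlonglongrightarrow> lambda0 \<Omega> \<rho> \<phi>"
    by simp
  have "L * (real n + 1) \<le> ln (Z n)"
    using F(2)[of "Suc n"] by (simp add: a_def add.commute)
  then show "exp (lambda0 \<Omega> \<rho> \<phi> * (real n + 1)) \<le> Z n"
    using Z_pos \<open>lambda0 \<Omega> \<rho> \<phi> = L\<close> by (metis exp_le_cancel_iff exp_ln)
qed

definition zc :: real where
  "zc = exp (- lambda0 \<Omega> \<rho> \<phi>)"

lemma zc_pos: "0 < zc"
  by (simp add: zc_def)

lemma Z_zc_power_ge: "exp (lambda0 \<Omega> \<rho> \<phi>) \<le> Z n * zc ^ n"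
proof -
  have "exp (lambda0 \<Omega> \<rho> \<phi>) = exp (lambda0 \<Omega> \<rho> \<phi> * (n + 1)) * zc ^ n"
    by (simp add: zc_def algebra_simps flip: exp_of_nat_mult exp_add)
  also have "\<dots> \<le> Z n * zc ^ n"
    using lambda0(2)[of n] zc_pos by (intro mult_right_mono) (auto simp: add.commute)
  finally show ?thesis .
qed

lemma Z_summable:
  assumes "0 < z" "z < zc"
  shows "summable (\<lambda>n. Z n * z ^ n)"
proof -
  define \<delta> where "\<delta> = (- lambda0 \<Omega> \<rho> \<phi> - ln z) / 2"
  have "0 < \<delta>"
    using assms
    by (simp add: \<delta>_def zc_def ln_less_cancel_iff[symmetric, of z] del: ln_less_cancel_iff)
  then have "eventually (\<lambda>n. ln (Z n) / n < lambda0 \<Omega> \<rho> \<phi> + \<delta>) sequentially"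
    by (intro order_tendstoD(2)[OF lambda0(1)]) simp
  then have "eventually (\<lambda>n. norm (Z n * z ^ n) \<le> exp (- \<delta>) ^ n) sequentially"
    using eventually_gt_at_top[of 0]
  proof eventually_elim
    case (elim n)
    then have "ln (Z n) + n * ln z \<le> n * (- \<delta>)"
      by (simp add: \<delta>_def field_simps)
    then have "exp (ln (Z n) + n * ln z) \<le> exp (n * (- \<delta>))"
      by simp
    moreover have "exp (ln (Z n) + n * ln z) = Z n * z ^ n"
      using Z_pos[of n] assms(1) by (simp add: exp_add exp_of_nat_mult)
    moreover have "exp (n * (- \<delta>)) = exp (- \<delta>) ^ n"
      by (metis exp_of_nat_mult)
    ultimately show ?case
      using Z_pos[of n] assms(1) by simp
  qed
  moreover have "summable (\<lambda>n. exp (- \<delta>) ^ n)"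
    using \<open>0 < \<delta>\<close> by (intro summable_geometric) simp
  ultimately show ?thesis
    by (rule summable_comparison_test_ev)
qed

end

section \<open>Bridges and the renewal equation\<close>

lemma bridge_iff:
  "bridge \<Omega> n \<gamma> \<longleftrightarrow> \<gamma> \<in> walks \<Omega> n \<and> 1 \<le> n \<and>
    (\<forall>i\<in>{1..n}. 0 < xc (\<gamma> ! i) \<and> xc (\<gamma> ! i) \<le> xc (\<gamma> ! n))"
  unfolding bridge_def by (auto simp: walks_nth_0)

lemma bridge_xc_le_last:
  assumes "bridge \<Omega> j \<beta>" "v \<in> set \<beta>"
  shows "xc v \<le> xc (last \<beta>)"
proof -
  have w: "\<beta> \<in> walks \<Omega> j"
    using assms(1) by (simp add: bridge_def)
  then obtain i where "i \<le> j" "v = \<beta> ! i"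
    using assms(2) by (auto simp: in_set_conv_nth walks_iff less_Suc_eq_le)
  moreover have "last \<beta> = \<beta> ! j"
    using w by (simp add: walks_iff last_eq_nth)
  ultimately show ?thesis
    using assms(1) walks_nth_0[OF w] by (cases "i = 0") (auto simp: bridge_iff)
qed

lemma bridge_xc_tl_pos:
  assumes "bridge \<Omega> m \<eta>" "v \<in> set (tl \<eta>)"
  shows "0 < xc v"
proof -
  have "length \<eta> = Suc m"
    using assms(1) by (simp add: bridge_def walks_iff)
  moreover obtain k where "k < length (tl \<eta>)" "v = tl \<eta> ! k"
    using assms(2) unfolding in_set_conv_nth by metis
  ultimately have "v = \<eta> ! Suc k" "Suc k \<le> m"
    by (auto simp: nth_tl)
  then show ?thesis
    using assms(1) by (auto simp: bridge_iff)
qed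

lemma renewal_time_iff:
  "\<gamma> \<in> walks \<Omega> n \<Longrightarrow> renewal_time \<gamma> i \<longleftrightarrow> 1 \<le> i \<and> i < n \<and>
    (\<forall>k. i < k \<and> k \<le> n \<longrightarrow> xc (\<gamma> ! i) < xc (\<gamma> ! k)) \<and> (\<forall>k<i. xc (\<gamma> ! k) \<le> xc (\<gamma> ! i))"
  unfolding renewal_time_def by (auto simp: walks_wlen)

lemma xc_join:
  assumes "\<beta> \<in> walks \<Omega> j" "\<eta> \<in> walks \<Omega> m" "i \<le> j + m"
  shows "xc (join \<beta> \<eta> ! i) = (if i \<le> j then xc (\<beta> ! i) else xc (\<beta> ! j) + xc (\<eta> ! (i - j)))"
  using assms join_nth_le[OF assms(1)] join_nth_ge[OF assms(1,2)] by simp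

lemma xc_walk_suffix:
  "\<gamma> \<in> walks \<Omega> n \<Longrightarrow> t + k \<le> n \<Longrightarrow> xc (walk_suffix t \<gamma> ! k) = xc (\<gamma> ! (t + k)) - xc (\<gamma> ! t)"
  by (simp add: walk_suffix_nth walks_iff)

lemma bridge_join:
  assumes "bridge \<Omega> j \<beta>" "bridge \<Omega> m \<eta>"
  shows "bridge \<Omega> (j + m) (join \<beta> \<eta>)"
proof -
  have w: "\<beta> \<in> walks \<Omega> j" "\<eta> \<in> walks \<Omega> m" and "1 \<le> j" "1 \<le> m"
    using assms by (simp_all add: bridge_def)
  have \<beta>: "0 < xc (\<beta> ! i) \<and> xc (\<beta> ! i) \<le> xc (\<beta> ! j)" if "1 \<le> i" "i \<le> j" for i
    using assms(1) that by (auto simp: bridge_iff)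
  have \<eta>: "0 < xc (\<eta> ! k) \<and> xc (\<eta> ! k) \<le> xc (\<eta> ! m)" if "1 \<le> k" "k \<le> m" for k
    using assms(2) that by (auto simp: bridge_iff)
  have "0 < xc (join \<beta> \<eta> ! i) \<and> xc (join \<beta> \<eta> ! i) \<le> xc (join \<beta> \<eta> ! (j + m))"
    if "1 \<le> i" "i \<le> j + m" for i
  proof (cases "i \<le> j")
    case True
    then show ?thesis
      using \<beta>[of i] \<eta>[of m] \<open>1 \<le> m\<close> that xc_join[OF w] by auto
  next
    case False
    then have "1 \<le> i - j" "i - j \<le> m"
      using that by auto
    then show ?thesis
      using False \<beta>[of j] \<eta>[of "i - j"] \<open>1 \<le> j\<close> that xc_join[OF w] by auto
  qed
  then show ?thesis
    unfolding bridge_iff using join_walks[OF w] \<open>1 \<le> j\<close> by auto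
qed

lemma renewal_time_join:
  assumes "bridge \<Omega> j \<beta>" "bridge \<Omega> m \<eta>"
  shows "renewal_time (join \<beta> \<eta>) j"
proof -
  have w: "\<beta> \<in> walks \<Omega> j" "\<eta> \<in> walks \<Omega> m"
    using assms by (simp_all add: bridge_def)
  have "xc (\<beta> ! i) \<le> xc (\<beta> ! j)" if "i \<le> j" for i
    using assms(1) that walks_nth_0[OF w(1)] by (cases "i = 0") (auto simp: bridge_iff)
  moreover have "0 < xc (\<eta> ! k)" if "1 \<le> k" "k \<le> m" for k
    using assms(2) that by (auto simp: bridge_iff)
  moreover have "1 \<le> j" "1 \<le> m"
    using assms by (auto simp: bridge_def)
  ultimately show ?thesis
    unfolding renewal_time_iff[OF join_walks[OF w]] using xc_join[OF w] by auto
qed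

lemma renewal_time_join_below:
  assumes "bridge \<Omega> j \<beta>" "bridge \<Omega> m \<eta>" "s < j"
  shows "renewal_time (join \<beta> \<eta>) s \<longleftrightarrow> renewal_time \<beta> s"
proof -
  have w: "\<beta> \<in> walks \<Omega> j" "\<eta> \<in> walks \<Omega> m"
    using assms by (simp_all add: bridge_def)
  have "xc (join \<beta> \<eta> ! j) < xc (join \<beta> \<eta> ! k)" if "j < k" "k \<le> j + m" for k
    using renewal_time_join[OF assms(1,2)] that by (simp add: renewal_time_iff[OF join_walks[OF w]])
  then show ?thesis
    unfolding renewal_time_iff[OF join_walks[OF w]] renewal_time_iff[OF w(1)]
    using xc_join[OF w] assms(3) by (auto dest: order.strict_trans2 intro: less_trans)
qed

lemma bridge_walk_prefix:
  assumes "bridge \<Omega> n \<gamma>" "renewal_time \<gamma> t"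
  shows "bridge \<Omega> t (walk_prefix t \<gamma>)"
proof -
  have w: "\<gamma> \<in> walks \<Omega> n"
    using assms by (simp add: bridge_def)
  then show ?thesis
    using assms walk_prefix_walks[OF w, of t]
    unfolding bridge_iff renewal_time_iff[OF w]
    by (auto simp: walk_prefix_nth order.order_iff_strict)
qed

lemma bridge_walk_suffix:
  assumes "bridge \<Omega> n \<gamma>" "renewal_time \<gamma> t"
  shows "bridge \<Omega> (n - t) (walk_suffix t \<gamma>)"
proof -
  have w: "\<gamma> \<in> walks \<Omega> n"
    using assms by (simp add: bridge_def)
  have "t < n"
    using assms(2) by (simp add: renewal_time_iff[OF w])
  then show ?thesis
    using assms walk_suffix_walks[OF w, of t] xc_walk_suffix[OF w]
    unfolding bridge_iff renewal_time_iff[OF w] by auto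
qed

context polymer_model
begin

definition bridges :: "nat \<Rightarrow> pt list set" where
  "bridges n = {\<gamma>. bridge \<Omega> n \<gamma>}"

definition irred_bridges :: "nat \<Rightarrow> pt list set" where
  "irred_bridges n = {\<gamma> \<in> bridges n. \<not> (\<exists>i. renewal_time \<gamma> i)}"

lemma bridges_walks: "bridges n \<subseteq> walks \<Omega> n"
  by (auto simp: bridges_def bridge_def)

lemma finite_bridges: "finite (bridges n)"
  using finite_subset[OF bridges_walks finite_walks[OF finite_steps]] .

lemma finite_irred_bridges: "finite (irred_bridges n)"
  using finite_subset[of "irred_bridges n" "bridges n"] finite_bridges
  by (auto simp: irred_bridges_def)

lemma bridges_steps_in: "\<gamma> \<in> bridges n \<Longrightarrow> steps_in \<Omega> \<gamma>"
  by (simp add: bridges_def bridge_def walks_iff)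

lemma weight_bridges_nonneg: "0 \<le> weight (bridges n)"
  and weight_irred_bridges_nonneg: "0 \<le> weight (irred_bridges n)"
  by (auto simp: irred_bridges_def intro!: weight_nonneg bridges_steps_in)

lemma sigma_join:
  assumes \<beta>: "bridge \<Omega> j \<beta>" and \<eta>: "bridge \<Omega> m \<eta>"
  shows "sigma \<rho> \<phi> (join \<beta> \<eta>) = sigma \<rho> \<phi> \<beta> * sigma \<rho> \<phi> \<eta>"
proof -
  have w: "\<beta> \<in> walks \<Omega> j" "\<eta> \<in> walks \<Omega> m" and "1 \<le> m"
    using assms by (auto simp: bridge_def)
  then obtain u \<eta>' where \<eta>': "\<eta> = origin # u # \<eta>'"
    by (cases \<eta> rule: remdups_adj.cases) (auto simp: walks_iff)
  have disjoint: "set \<beta> \<inter> set (map (shift (last \<beta>)) (u # \<eta>')) = {}"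
    using bridge_xc_le_last[OF \<beta>] bridge_xc_tl_pos[OF \<eta>] by (fastforce simp: \<eta>')
  have "\<beta> \<noteq> []" "steps_in \<Omega> (u # \<eta>')"
    using w by (auto simp: walks_iff \<eta>')
  then have "sigma \<rho> \<phi> (join \<beta> \<eta>) = sigma \<rho> \<phi> \<beta> * \<rho> u * sigma \<rho> \<phi> (u # \<eta>')"
    using sigma_append_disjoint[OF \<open>\<beta> \<noteq> []\<close> _ disjoint] sigma_shift(1)[of "u # \<eta>'" "last \<beta>"]
    by (simp add: join_def \<eta>')
  moreover have "origin \<notin> set (u # \<eta>')"
    using bridge_xc_tl_pos[OF \<eta>] by (metis \<eta>' less_irrefl list.sel(3) xc_origin)
  then have "sigma \<rho> \<phi> \<eta> = \<rho> u * sigma \<rho> \<phi> (u # \<eta>')"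
    using sigma_Cons_notin[of "u # \<eta>'" origin] by (simp add: \<eta>')
  ultimately show ?thesis
    by simp
qed

definition first_renewal_at :: "nat \<Rightarrow> nat \<Rightarrow> pt list set" where
  "first_renewal_at n j = {\<gamma> \<in> bridges n. renewal_time \<gamma> j \<and> (\<forall>s<j. \<not> renewal_time \<gamma> s)}"

lemma renewal_time_less: "bridge \<Omega> n \<gamma> \<Longrightarrow> renewal_time \<gamma> s \<Longrightarrow> 1 \<le> s \<and> s < n"
  by (auto simp: bridge_def renewal_time_iff)

lemma first_renewal_at_eq_join:
  assumes "1 \<le> j" "j < n"
  shows "first_renewal_at n j = (\<lambda>(\<beta>, \<eta>). join \<beta> \<eta>) ` (irred_bridges j \<times> bridges (n - j))"
proof (intro equalityI subsetI)
  fix \<gamma>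
  assume "\<gamma> \<in> first_renewal_at n j"
  then have \<gamma>: "bridge \<Omega> n \<gamma>" "renewal_time \<gamma> j" "\<And>s. s < j \<Longrightarrow> \<not> renewal_time \<gamma> s"
    by (auto simp: first_renewal_at_def bridges_def)
  let ?\<beta> = "walk_prefix j \<gamma>" and ?\<eta> = "walk_suffix j \<gamma>"
  have \<beta>: "bridge \<Omega> j ?\<beta>" and \<eta>: "bridge \<Omega> (n - j) ?\<eta>"
    using bridge_walk_prefix[OF \<gamma>(1,2)] bridge_walk_suffix[OF \<gamma>(1,2)] by auto
  have \<gamma>_eq: "join ?\<beta> ?\<eta> = \<gamma>"
    using \<gamma>(1) assms by (intro join_walk_prefix_suffix) (auto simp: bridge_def)
  have "\<not> renewal_time ?\<beta> s" for s
    using renewal_time_join_below[OF \<beta> \<eta>] renewal_time_less[OF \<beta>] \<gamma>(3) \<gamma>_eq by metis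
  then show "\<gamma> \<in> (\<lambda>(\<beta>, \<eta>). join \<beta> \<eta>) ` (irred_bridges j \<times> bridges (n - j))"
    using \<beta> \<eta> \<gamma>_eq
    by (auto simp: irred_bridges_def bridges_def intro!: image_eqI[of _ _ "(?\<beta>, ?\<eta>)"])
next
  fix \<gamma>
  assume "\<gamma> \<in> (\<lambda>(\<beta>, \<eta>). join \<beta> \<eta>) ` (irred_bridges j \<times> bridges (n - j))"
  then obtain \<beta> \<eta> where \<gamma>: "\<gamma> = join \<beta> \<eta>"
    and \<beta>: "bridge \<Omega> j \<beta>" "\<And>s. \<not> renewal_time \<beta> s" and \<eta>: "bridge \<Omega> (n - j) \<eta>"
    by (auto simp: irred_bridges_def bridges_def)
  then show "\<gamma> \<in> first_renewal_at n j"
    using bridge_join[OF \<beta>(1) \<eta>] renewal_time_join[OF \<beta>(1) \<eta>]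
      renewal_time_join_below[OF \<beta>(1) \<eta>] assms
    by (auto simp: first_renewal_at_def bridges_def)
qed

lemma weight_first_renewal_at:
  assumes "1 \<le> j" "j < n"
  shows "weight (first_renewal_at n j) = weight (irred_bridges j) * weight (bridges (n - j))"
proof -
  have "inj_on (\<lambda>(\<beta>, \<eta>). join \<beta> \<eta>) (irred_bridges j \<times> bridges (n - j))"
    by (rule inj_on_subset[OF inj_on_join[of \<Omega> j "n - j"]])
      (use bridges_walks in \<open>auto simp: irred_bridges_def\<close>)
  then have "weight (first_renewal_at n j)
      = (\<Sum>(\<beta>, \<eta>)\<in>irred_bridges j \<times> bridges (n - j). sigma \<rho> \<phi> (join \<beta> \<eta>))"
    by (simp add: first_renewal_at_eq_join[OF assms] weight_def sum.reindex case_prod_beta')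
  also have "\<dots> = (\<Sum>(\<beta>, \<eta>)\<in>irred_bridges j \<times> bridges (n - j). sigma \<rho> \<phi> \<beta> * sigma \<rho> \<phi> \<eta>)"
    by (intro sum.cong) (auto simp: irred_bridges_def bridges_def sigma_join)
  finally show ?thesis
    by (simp add: weight_def sum_product sum.cartesian_product)
qed

lemma bridges_eq_irred_Un_first_renewal:
  "bridges n = irred_bridges n \<union> (\<Union>j\<in>{1..<n}. first_renewal_at n j)"
proof (intro equalityI subsetI)
  fix \<gamma>
  assume \<gamma>: "\<gamma> \<in> bridges n"
  show "\<gamma> \<in> irred_bridges n \<union> (\<Union>j\<in>{1..<n}. first_renewal_at n j)"
  proof (cases "\<exists>i. renewal_time \<gamma> i")
    case True
    define j where "j = (LEAST i. renewal_time \<gamma> i)"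
    have "renewal_time \<gamma> j" "\<And>s. s < j \<Longrightarrow> \<not> renewal_time \<gamma> s"
      using True unfolding j_def by (auto intro: LeastI_ex dest: not_less_Least)
    then show ?thesis
      using \<gamma> renewal_time_less[of n \<gamma> j] by (auto simp: first_renewal_at_def bridges_def)
  qed (use \<gamma> in \<open>simp add: irred_bridges_def\<close>)
qed (auto simp: irred_bridges_def first_renewal_at_def)

lemma weight_bridges_renewal:
  "weight (bridges n)
    = weight (irred_bridges n) + (\<Sum>j\<in>{1..<n}. weight (irred_bridges j) * weight (bridges (n - j)))"
proof -
  have fin: "finite (first_renewal_at n j)" for j
    using finite_bridges by (rule finite_subset[rotated]) (auto simp: first_renewal_at_def)
  have "irred_bridges n \<inter> (\<Union>j\<in>{1..<n}. first_renewal_at n j) = {}"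
    by (auto simp: irred_bridges_def first_renewal_at_def)
  moreover have "first_renewal_at n j \<inter> first_renewal_at n k = {}" if "j \<noteq> k" for j k
    using that by (auto simp: first_renewal_at_def dest: not_less_iff_gr_or_eq[THEN iffD1])
  ultimately have
    "weight (bridges n) = weight (irred_bridges n) + (\<Sum>j\<in>{1..<n}. weight (first_renewal_at n j))"
    unfolding bridges_eq_irred_Un_first_renewal weight_def
    by (simp add: sum.union_disjoint finite_irred_bridges fin sum.UNION_disjoint)
  then show ?thesis
    by (simp add: weight_first_renewal_at)
qed

section \<open>Half-space walks and the Hammersley-Welsh bound\<close>

lemma sigma_split_at_last_visit:
  assumes \<gamma>: "\<gamma> \<in> walks \<Omega> n" "t \<le> n" and last: "\<And>k. t < k \<Longrightarrow> k \<le> n \<Longrightarrow> \<gamma> ! k \<noteq> \<gamma> ! t"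
  shows "sigma \<rho> \<phi> \<gamma> \<le> sigma \<rho> \<phi> (walk_prefix t \<gamma>) * sigma \<rho> \<phi> (drop t \<gamma>)"
proof (cases "t = n")
  case True
  then have "drop t \<gamma> = [\<gamma> ! t]" "walk_prefix t \<gamma> = \<gamma>"
    using \<gamma> Cons_nth_drop_Suc[of t \<gamma>] by (auto simp: walks_iff walk_prefix_def)
  then show ?thesis
    by (simp add: sigma_eq visit_weight_singleton[of \<phi>, OF phi_1])
next
  case False
  let ?\<alpha> = "take (Suc t) \<gamma>" and ?\<beta> = "drop (Suc t) \<gamma>"
  have l: "length \<gamma> = Suc n" "steps_in \<Omega> \<gamma>"
    using \<gamma> by (auto simp: walks_iff)
  have drop_t: "drop t \<gamma> = \<gamma> ! t # ?\<beta>" and "?\<beta> \<noteq> []"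
    using l \<gamma>(2) False by (auto simp: Cons_nth_drop_Suc)
  have "\<gamma> ! t \<notin> set ?\<beta>"
    using last l by (auto simp: in_set_conv_nth)
  then have "sigma \<rho> \<phi> (drop t \<gamma>) = \<rho> (step (\<gamma> ! t) (hd ?\<beta>)) * sigma \<rho> \<phi> ?\<beta>"
    unfolding drop_t by (rule sigma_Cons_notin[OF \<open>?\<beta> \<noteq> []\<close>])
  moreover have "sigma \<rho> \<phi> (?\<alpha> @ ?\<beta>) \<le> sigma \<rho> \<phi> ?\<alpha> * \<rho> (step (last ?\<alpha>) (hd ?\<beta>)) * sigma \<rho> \<phi> ?\<beta>"
    using l \<open>?\<beta> \<noteq> []\<close> by (intro sigma_append_le) auto
  moreover have "last ?\<alpha> = \<gamma> ! t"
    using l \<gamma>(2) by (simp add: last_eq_nth)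
  ultimately show ?thesis
    by (simp add: walk_prefix_def mult.assoc)
qed

definition reflected_suffix :: "nat \<Rightarrow> pt list \<Rightarrow> pt list" where
  "reflected_suffix t \<gamma> = map reflect (walk_suffix t \<gamma>)"

lemma reflected_suffix:
  assumes "\<gamma> \<in> walks \<Omega> n" "t \<le> n"
  shows "reflected_suffix t \<gamma> \<in> walks \<Omega> (n - t)"
    and "\<And>k. t + k \<le> n \<Longrightarrow> xc (reflected_suffix t \<gamma> ! k) = xc (\<gamma> ! t) - xc (\<gamma> ! (t + k))"
    and "sigma \<rho> \<phi> (reflected_suffix t \<gamma>) = sigma \<rho> \<phi> (drop t \<gamma>)"
proof -
  have s: "walk_suffix t \<gamma> \<in> walks \<Omega> (n - t)"
    using walk_suffix_walks[OF assms] .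
  then have steps: "steps_in \<Omega> (walk_suffix t \<gamma>)"
    by (simp add: walks_iff)
  have sym: "\<And>v. v \<in> \<Omega> \<Longrightarrow> reflect v \<in> \<Omega> \<and> \<rho> (reflect v) = \<rho> v"
    using reflect_step by blast
  show "reflected_suffix t \<gamma> \<in> walks \<Omega> (n - t)"
    using s sigma_map(1)[OF sym step_reflect inj_reflect steps]
    by (cases "walk_suffix t \<gamma>") (auto simp: walks_iff reflected_suffix_def)
  show "xc (reflected_suffix t \<gamma> ! k) = xc (\<gamma> ! t) - xc (\<gamma> ! (t + k))" if "t + k \<le> n" for k
    using that s xc_walk_suffix[OF assms(1) that] by (simp add: reflected_suffix_def walks_iff)
  have "steps_in \<Omega> (drop t \<gamma>)"
    using assms(1) by (simp add: walks_iff successively_conv_nth)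
  then show "sigma \<rho> \<phi> (reflected_suffix t \<gamma>) = sigma \<rho> \<phi> (drop t \<gamma>)"
    unfolding reflected_suffix_def
    using sigma_map(2)[OF sym step_reflect inj_reflect steps]
    by (simp add: walk_suffix_def sigma_shift)
qed

definition half_walks :: "nat \<Rightarrow> pt list set" where
  "half_walks n = {\<gamma> \<in> walks \<Omega> n. \<forall>i\<in>{1..n}. 0 < xc (\<gamma> ! i)}"

definition half_walks_span :: "nat \<Rightarrow> nat \<Rightarrow> pt list set" where
  "half_walks_span s n = {\<gamma> \<in> half_walks n. \<forall>i\<le>n. xc (\<gamma> ! i) \<le> int s}"

definition bridges_span :: "nat \<Rightarrow> nat \<Rightarrow> pt list set" where
  "bridges_span k n = {\<gamma> \<in> bridges n. xc (\<gamma> ! n) = int k}"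

lemma half_walks_walks: "half_walks n \<subseteq> walks \<Omega> n"
  and half_walks_span_walks: "half_walks_span s n \<subseteq> walks \<Omega> n"
  and bridges_span_walks: "bridges_span k n \<subseteq> walks \<Omega> n"
  using bridges_walks by (auto simp: half_walks_def half_walks_span_def bridges_span_def)

lemma finite_half_walks: "finite (half_walks n)"
  and finite_half_walks_span: "finite (half_walks_span s n)"
  and finite_bridges_span: "finite (bridges_span k n)"
  by (rule finite_subset[OF _ finite_walks[OF finite_steps]],
      rule half_walks_walks half_walks_span_walks bridges_span_walks)+

lemma weight_walks_nonneg: "A \<subseteq> walks \<Omega> n \<Longrightarrow> 0 \<le> weight A"
  by (intro weight_nonneg) (auto simp: walks_iff)

lemma weight_half_walks_span_0: "weight (half_walks_span s 0) \<le> 1"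
proof -
  have "half_walks_span s 0 \<subseteq> {[origin]}"
    by (auto simp: half_walks_span_def half_walks_def walks_iff length_Suc_conv)
  moreover have "sigma \<rho> \<phi> [origin] = 1"
    by (simp add: sigma_eq visit_weight_singleton[of \<phi>, OF phi_1])
  ultimately show ?thesis
    unfolding weight_def using sum_mono2[of "{[origin]}" "half_walks_span s 0" "sigma \<rho> \<phi>"] by auto
qed

definition top_time :: "nat \<Rightarrow> pt list \<Rightarrow> nat" where
  "top_time n \<gamma> = last_argmax (\<lambda>i. xc (\<gamma> ! i)) n"

lemma top_time:
  shows "top_time n \<gamma> \<le> n" and "\<And>k. k \<le> n \<Longrightarrow> xc (\<gamma> ! k) \<le> xc (\<gamma> ! top_time n \<gamma>)"
    and "\<And>k. top_time n \<gamma> < k \<Longrightarrow> k \<le> n \<Longrightarrow> xc (\<gamma> ! k) < xc (\<gamma> ! top_time n \<gamma>)"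
  using last_argmax[where f="\<lambda>i. xc (\<gamma> ! i)" and n=n] by (simp_all add: top_time_def)

text \<open>The Hammersley-Welsh step: cut a half-space walk at the last time it reaches its maximal first
  coordinate \<open>k\<close>; the first piece is a bridge of span \<open>k\<close> and the reflected second piece is a
  half-space walk of span less than \<open>k\<close>. Iterating gives the product bound below.\<close>

lemma half_walk_top_decomposition:
  assumes \<gamma>: "\<gamma> \<in> half_walks_span s n" and "1 \<le> n"
    and t_eq: "t = top_time n \<gamma>" and k_eq: "k = nat (xc (\<gamma> ! t))"
  shows "k \<in> {1..s}" and "t \<in> {1..n}" and "walk_prefix t \<gamma> \<in> bridges_span k t"
    and "reflected_suffix t \<gamma> \<in> half_walks_span (k - 1) (n - t)"
proof -
  have w: "\<gamma> \<in> walks \<Omega> n" and pos: "\<And>i. 1 \<le> i \<Longrightarrow> i \<le> n \<Longrightarrow> 0 < xc (\<gamma> ! i)"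
    and ub: "\<And>i. i \<le> n \<Longrightarrow> xc (\<gamma> ! i) \<le> int s"
    using \<gamma> by (auto simp: half_walks_span_def half_walks_def)
  have tn: "t \<le> n" and top: "\<And>i. i \<le> n \<Longrightarrow> xc (\<gamma> ! i) \<le> xc (\<gamma> ! t)"
    and after: "\<And>i. t < i \<Longrightarrow> i \<le> n \<Longrightarrow> xc (\<gamma> ! i) < xc (\<gamma> ! t)"
    using top_time[where n=n and \<gamma>=\<gamma>] by (auto simp: t_eq)
  have "1 \<le> xc (\<gamma> ! t)"
    using top[of 1] pos[of 1] \<open>1 \<le> n\<close> by simp
  then have k: "int k = xc (\<gamma> ! t)" "1 \<le> k"
    by (auto simp: k_eq)
  then show "k \<in> {1..s}"
    using ub[OF tn] by auto
  have "t \<noteq> 0"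
  proof
    assume "t = 0"
    then have "int k = 0"
      using k(1) walks_nth_0[OF w] by simp
    then show False
      using k(2) by simp
  qed
  then show "t \<in> {1..n}"
    using tn by auto
  have "bridge \<Omega> t (walk_prefix t \<gamma>)"
    unfolding bridge_iff using walk_prefix_walks[OF w tn] \<open>t \<noteq> 0\<close> pos top tn
    by (auto simp: walk_prefix_nth)
  then show "walk_prefix t \<gamma> \<in> bridges_span k t"
    using k by (simp add: bridges_span_def bridges_def walk_prefix_nth)
  have "0 < xc (\<gamma> ! (t + i))" if "i \<le> n - t" for i
    using pos[of "t + i"] \<open>t \<noteq> 0\<close> that tn by simp
  then show "reflected_suffix t \<gamma> \<in> half_walks_span (k - 1) (n - t)"
    using reflected_suffix[OF w tn] after[of "t + _"] k tn
    by (auto simp: half_walks_span_def half_walks_def of_nat_diff)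
qed

lemma hammersley_welsh_step:
  assumes "1 \<le> n"
  shows "weight (half_walks_span s n)
    \<le> (\<Sum>k\<in>{1..s}. \<Sum>j\<in>{1..n}. weight (bridges_span k j) * weight (half_walks_span (k - 1) (n - j)))"
proof -
  define T where
    "T = (SIGMA k:{1..s}. SIGMA j:{1..n}. bridges_span k j \<times> half_walks_span (k - 1) (n - j))"
  define h where "h \<gamma> = (nat (xc (\<gamma> ! top_time n \<gamma>)), top_time n \<gamma>,
    walk_prefix (top_time n \<gamma>) \<gamma>, reflected_suffix (top_time n \<gamma>) \<gamma>)" for \<gamma>
  define G where "G = (\<lambda>(k :: nat, j :: nat, \<beta>, \<eta>). sigma \<rho> \<phi> \<beta> * sigma \<rho> \<phi> \<eta>)"
  have "weight (half_walks_span s n) \<le> sum G T"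
    unfolding weight_def
  proof (rule sum_le_sum_inj_on)
    show "finite T"
      by (auto simp: T_def finite_bridges_span finite_half_walks_span)
    show "inj_on h (half_walks_span s n)"
    proof (rule inj_on_inverseI)
      fix \<gamma>
      assume \<gamma>: "\<gamma> \<in> half_walks_span s n"
      then have w: "\<gamma> \<in> walks \<Omega> n"
        by (simp add: half_walks_span_def half_walks_def)
      have "map reflect (reflected_suffix (top_time n \<gamma>) \<gamma>) = walk_suffix (top_time n \<gamma>) \<gamma>"
        by (simp add: reflected_suffix_def comp_def)
      then show "(\<lambda>(k, t, \<beta>, \<eta>). join \<beta> (map reflect \<eta>)) (h \<gamma>) = \<gamma>"
        using join_walk_prefix_suffix[OF w top_time(1)] by (simp add: h_def)
    qed
    show "h ` half_walks_span s n \<subseteq> T"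
      using half_walk_top_decomposition[OF _ assms refl refl] by (auto simp: T_def h_def)
    show "sigma \<rho> \<phi> \<gamma> \<le> G (h \<gamma>)" if \<gamma>: "\<gamma> \<in> half_walks_span s n" for \<gamma>
    proof -
      have w: "\<gamma> \<in> walks \<Omega> n"
        using \<gamma> by (simp add: half_walks_span_def half_walks_def)
      have "\<gamma> ! k \<noteq> \<gamma> ! top_time n \<gamma>" if "top_time n \<gamma> < k" "k \<le> n" for k
        using top_time(3)[OF that] by auto
      then show ?thesis
        using sigma_split_at_last_visit[OF w top_time(1)] reflected_suffix(3)[OF w top_time(1)]
        by (simp add: G_def h_def)
    qed
    show "0 \<le> G x" if "x \<in> T" for x
      using that by (auto simp: T_def G_def intro!: mult_nonneg_nonneg sigma_walk_nonneg
          dest: subsetD[OF half_walks_span_walks] subsetD[OF bridges_span_walks])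
  qed
  also have "sum G T = (\<Sum>k\<in>{1..s}. \<Sum>j\<in>{1..n}.
      weight (bridges_span k j) * weight (half_walks_span (k - 1) (n - j)))"
    unfolding T_def G_def weight_def
    by (simp add: sum.Sigma finite_bridges_span finite_half_walks_span sum_product
        sum.cartesian_product)
  finally show ?thesis .
qed

definition gf :: "(nat \<Rightarrow> pt list set) \<Rightarrow> real \<Rightarrow> nat \<Rightarrow> real" where
  "gf A z N = (\<Sum>n\<le>N. weight (A n) * z ^ n)"

lemma gf_nonneg: "(\<And>n. A n \<subseteq> walks \<Omega> n) \<Longrightarrow> 0 \<le> z \<Longrightarrow> 0 \<le> gf A z N"
  unfolding gf_def by (intro sum_nonneg mult_nonneg_nonneg weight_walks_nonneg) auto

lemma gf_mono: "(\<And>n. A n \<subseteq> walks \<Omega> n) \<Longrightarrow> 0 \<le> z \<Longrightarrow> N \<le> M \<Longrightarrow> gf A z N \<le> gf A z M"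
  unfolding gf_def by (intro sum_mono2 mult_nonneg_nonneg weight_walks_nonneg) auto

lemma gf_bridges_span_nonneg: "0 \<le> z \<Longrightarrow> 0 \<le> gf (bridges_span k) z N"
  by (rule gf_nonneg[OF bridges_span_walks])

lemma gf_half_walks_span_le:
  assumes z: "0 \<le> z"
  shows "gf (half_walks_span s) z N
    \<le> 1 + (\<Sum>k\<in>{1..s}. gf (bridges_span k) z N * gf (half_walks_span (k - 1)) z N)"
proof -
  define F where "F k n j = (weight (bridges_span k j) * z ^ j) *
    (weight (half_walks_span (k - 1) (n - j)) * z ^ (n - j))" for k n j
  have F_nonneg: "0 \<le> F k n j" for k n j
    using z weight_walks_nonneg[OF bridges_span_walks] weight_walks_nonneg[OF half_walks_span_walks]
    by (simp add: F_def)
  have "gf (half_walks_span s) z N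
      = weight (half_walks_span s 0) + (\<Sum>n\<in>{1..N}. weight (half_walks_span s n) * z ^ n)"
    unfolding gf_def atMost_atLeast0 by (simp add: sum.atLeast_Suc_atMost)
  also have "\<dots> \<le> 1 + (\<Sum>n\<in>{1..N}. \<Sum>k\<in>{1..s}. \<Sum>j\<in>{1..n}. F k n j)"
  proof (rule add_mono[OF weight_half_walks_span_0 sum_mono])
    fix n
    assume "n \<in> {1..N}"
    then have "weight (half_walks_span s n) * z ^ n \<le> (\<Sum>k\<in>{1..s}. \<Sum>j\<in>{1..n}.
        weight (bridges_span k j) * weight (half_walks_span (k - 1) (n - j))) * z ^ n"
      using hammersley_welsh_step z by (intro mult_right_mono) auto
    also have "\<dots> = (\<Sum>k\<in>{1..s}. \<Sum>j\<in>{1..n}. F k n j)"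
      by (auto simp: F_def sum_distrib_right intro!: sum.cong simp flip: power_add)
    finally show "weight (half_walks_span s n) * z ^ n \<le> (\<Sum>k\<in>{1..s}. \<Sum>j\<in>{1..n}. F k n j)" .
  qed
  also have "(\<Sum>n\<in>{1..N}. \<Sum>k\<in>{1..s}. \<Sum>j\<in>{1..n}. F k n j)
      = (\<Sum>k\<in>{1..s}. \<Sum>n\<in>{1..N}. \<Sum>j\<in>{1..n}. F k n j)"
    by (rule sum.swap)
  also have "\<dots> \<le> (\<Sum>k\<in>{1..s}. \<Sum>n\<le>N. \<Sum>j\<le>n. F k n j)"
  proof (rule sum_mono)
    fix k
    have "(\<Sum>n\<in>{1..N}. \<Sum>j\<in>{1..n}. F k n j) \<le> (\<Sum>n\<in>{1..N}. \<Sum>j\<le>n. F k n j)"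
      by (intro sum_mono sum_mono2) (auto simp: F_nonneg)
    also have "\<dots> \<le> (\<Sum>n\<le>N. \<Sum>j\<le>n. F k n j)"
      by (intro sum_mono2) (auto intro!: sum_nonneg simp: F_nonneg)
    finally show "(\<Sum>n\<in>{1..N}. \<Sum>j\<in>{1..n}. F k n j) \<le> (\<Sum>n\<le>N. \<Sum>j\<le>n. F k n j)" .
  qed
  also have "\<dots> \<le> (\<Sum>k\<in>{1..s}. gf (bridges_span k) z N * gf (half_walks_span (k - 1)) z N)"
    unfolding F_def gf_def
    using z weight_walks_nonneg[OF bridges_span_walks] weight_walks_nonneg[OF half_walks_span_walks]
    by (intro sum_mono sum_convolution_le) auto
  finally show ?thesis
    by simp
qed

lemma gf_half_walks_span_le_prod:
  assumes z: "0 \<le> z"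
  shows "gf (half_walks_span s) z N \<le> (\<Prod>k\<in>{1..s}. 1 + gf (bridges_span k) z N)"
proof (induction s rule: less_induct)
  case (less s)
  have "gf (half_walks_span s) z N
      \<le> 1 + (\<Sum>k\<in>{1..s}. gf (bridges_span k) z N * gf (half_walks_span (k - 1)) z N)"
    by (rule gf_half_walks_span_le[OF z])
  also have "\<dots> \<le> 1 + (\<Sum>k\<in>{1..s}.
      gf (bridges_span k) z N * (\<Prod>i\<in>{1..k - 1}. 1 + gf (bridges_span i) z N))"
    using less gf_bridges_span_nonneg[OF z] by (auto intro!: sum_mono mult_left_mono)
  also have "\<dots> = (\<Prod>k\<in>{1..s}. 1 + gf (bridges_span k) z N)"
    by (rule prod_one_plus_telescope[symmetric])
  finally show ?case .
qed

lemma gf_half_walks_span_le_exp: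
  assumes z: "0 \<le> z"
  shows "gf (half_walks_span s) z N \<le> exp (gf bridges z N)"
proof -
  have "gf (half_walks_span s) z N \<le> (\<Prod>k\<in>{1..s}. 1 + gf (bridges_span k) z N)"
    by (rule gf_half_walks_span_le_prod[OF z])
  also have "\<dots> \<le> (\<Prod>k\<in>{1..s}. exp (gf (bridges_span k) z N))"
    using gf_bridges_span_nonneg[OF z] by (intro prod_mono) (auto simp: add.commute)
  also have "\<dots> = exp (\<Sum>k\<in>{1..s}. gf (bridges_span k) z N)"
    by (simp add: exp_sum)
  also have "(\<Sum>k\<in>{1..s}. gf (bridges_span k) z N)
      = (\<Sum>j\<le>N. (\<Sum>k\<in>{1..s}. weight (bridges_span k j)) * z ^ j)"
    unfolding gf_def by (subst sum.swap) (simp add: sum_distrib_right)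
  also have "\<dots> \<le> gf bridges z N"
  proof -
    have "(\<Sum>k\<in>{1..s}. weight (bridges_span k j)) = weight (\<Union>k\<in>{1..s}. bridges_span k j)" for j
      unfolding weight_def using finite_bridges_span
      by (intro sum.UNION_disjoint[symmetric]) (auto simp: bridges_span_def)
    moreover have "weight (\<Union>k\<in>{1..s}. bridges_span k j) \<le> weight (bridges j)" for j
      by (intro weight_mono finite_bridges bridges_steps_in) (auto simp: bridges_span_def)
    ultimately show ?thesis
      unfolding gf_def using z by (intro sum_mono mult_right_mono) auto
  qed
  finally show ?thesis
    by simp
qed


definition max_step :: int where
  "max_step = Max (xc ` \<Omega>)"

lemma xc_walk_le: "\<gamma> \<in> walks \<Omega> n \<Longrightarrow> i \<le> n \<Longrightarrow> xc (\<gamma> ! i) \<le> int i * max_step"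
proof (induction i)
  case (Suc i)
  have "step (\<gamma> ! i) (\<gamma> ! Suc i) \<in> \<Omega>"
    using Suc.prems by (intro successively_nth[where P="\<lambda>u v. step u v \<in> \<Omega>"]) (auto simp: walks_iff)
  then have "xc (step (\<gamma> ! i) (\<gamma> ! Suc i)) \<le> max_step"
    unfolding max_step_def by (rule Max_ge[OF finite_imageI[OF finite_steps] imageI])
  then show ?case
    using Suc by (simp add: algebra_simps)
qed (simp add: walks_nth_0)

lemma gf_half_walks_le_exp:
  assumes "0 \<le> z"
  shows "gf half_walks z N \<le> exp (gf bridges z N)"
proof -
  obtain e where e: "e \<in> \<Omega>" "0 < xc e"
    using forward_step by blast
  then have "0 \<le> max_step"
    unfolding max_step_def using finite_steps
    by (meson Max_ge finite_imageI imageI less_le order_trans)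
  define S where "S = nat (int N * max_step)"
  have "half_walks n = half_walks_span S n" if "n \<le> N" for n
  proof -
    have "xc (\<gamma> ! i) \<le> int S" if "\<gamma> \<in> half_walks n" "i \<le> n" for \<gamma> i
    proof -
      have "xc (\<gamma> ! i) \<le> int i * max_step"
        using xc_walk_le that by (auto simp: half_walks_def)
      also have "\<dots> \<le> int N * max_step"
        using that \<open>n \<le> N\<close> \<open>0 \<le> max_step\<close> by (intro mult_right_mono) auto
      finally show ?thesis
        by (simp add: S_def)
    qed
    then show ?thesis
      by (auto simp: half_walks_span_def)
  qed
  then have "gf half_walks z N = gf (half_walks_span S) z N"
    unfolding gf_def by (intro sum.cong) auto
  then show ?thesis
    using gf_half_walks_span_le_exp[OF assms] by simp
qed

section \<open>Divergence of the bridge series at the critical point\<close>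

definition bottom_time :: "nat \<Rightarrow> pt list \<Rightarrow> nat" where
  "bottom_time n \<gamma> = last_argmax (\<lambda>i. - xc (\<gamma> ! i)) n"

lemma bottom_time:
  shows "bottom_time n \<gamma> \<le> n" and "\<And>k. k \<le> n \<Longrightarrow> xc (\<gamma> ! bottom_time n \<gamma>) \<le> xc (\<gamma> ! k)"
    and "\<And>k. bottom_time n \<gamma> < k \<Longrightarrow> k \<le> n \<Longrightarrow> xc (\<gamma> ! bottom_time n \<gamma>) < xc (\<gamma> ! k)"
  using last_argmax[where f="\<lambda>i. - xc (\<gamma> ! i)" and n=n] by (simp_all add: bottom_time_def)

definition reversed_prefix :: "nat \<Rightarrow> pt list \<Rightarrow> pt list" where
  "reversed_prefix t \<gamma> = map (step (\<gamma> ! t)) (rev (walk_prefix t \<gamma>))"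

lemma reversed_prefix:
  assumes "\<gamma> \<in> walks \<Omega> n" "t \<le> n"
  shows "reversed_prefix t \<gamma> \<in> walks \<Omega> t"
    and "\<And>i. i \<le> t \<Longrightarrow> xc (reversed_prefix t \<gamma> ! i) = xc (\<gamma> ! (t - i)) - xc (\<gamma> ! t)"
    and "sigma \<rho> \<phi> (reversed_prefix t \<gamma>) = sigma \<rho> \<phi> (walk_prefix t \<gamma>)"
    and "last (reversed_prefix t \<gamma>) = negate (\<gamma> ! t)"
proof -
  have p: "walk_prefix t \<gamma> \<in> walks \<Omega> t"
    using walk_prefix_walks[OF assms] .
  then have steps: "steps_in \<Omega> (walk_prefix t \<gamma>)" and len: "length (walk_prefix t \<gamma>) = Suc t"
    by (simp_all add: walks_iff)
  note rev = sigma_rev[OF negate_step steps]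
  have "hd (rev (walk_prefix t \<gamma>)) = \<gamma> ! t" "rev (walk_prefix t \<gamma>) \<noteq> []"
    using len by (auto simp: hd_rev last_eq_nth walk_prefix_nth)
  then show "reversed_prefix t \<gamma> \<in> walks \<Omega> t"
    using len rev(1) by (simp add: walks_iff reversed_prefix_def steps_in_map_step hd_map)
  show "xc (reversed_prefix t \<gamma> ! i) = xc (\<gamma> ! (t - i)) - xc (\<gamma> ! t)" if "i \<le> t" for i
    using that len by (simp add: reversed_prefix_def rev_nth walk_prefix_nth)
  show "sigma \<rho> \<phi> (reversed_prefix t \<gamma>) = sigma \<rho> \<phi> (walk_prefix t \<gamma>)"
    using rev sigma_shift(2)[OF rev(1)] by (simp add: reversed_prefix_def)
  have "walk_prefix t \<gamma> \<noteq> []" "hd (walk_prefix t \<gamma>) = origin"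
    using p by (auto simp: walks_iff)
  then show "last (reversed_prefix t \<gamma>) = negate (\<gamma> ! t)"
    by (simp add: reversed_prefix_def last_map last_rev step_origin)
qed

lemma prepend_step:
  assumes \<beta>: "\<beta> \<in> walks \<Omega> m" "\<And>i. i \<le> m \<Longrightarrow> 0 \<le> xc (\<beta> ! i)" and e: "e \<in> \<Omega>" "0 < xc e"
  shows "origin # map (shift e) \<beta> \<in> half_walks (Suc m)"
    and "sigma \<rho> \<phi> (origin # map (shift e) \<beta>) = \<rho> e * sigma \<rho> \<phi> \<beta>"
proof -
  obtain \<beta>' where \<beta>': "\<beta> = origin # \<beta>'"
    using \<beta>(1) by (cases \<beta>) (auto simp: walks_iff)
  have steps: "steps_in \<Omega> \<beta>"
    using \<beta>(1) by (simp add: walks_iff)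
  have step_e: "step origin e = e"
    by (simp add: step_def origin_def)
  have x: "0 < xc (map (shift e) \<beta> ! i)" if "i \<le> m" for i
    using \<beta> e that by (simp add: walks_iff add_pos_nonneg)
  have "steps_in \<Omega> (map (shift e) \<beta>)"
    using steps by (simp add: steps_in_map_shift)
  then have "steps_in \<Omega> (origin # map (shift e) \<beta>)"
    using e step_e by (simp add: \<beta>')
  moreover have "0 < xc ((origin # map (shift e) \<beta>) ! i)" if "i \<in> {1..Suc m}" for i
    using x[of "i - 1"] that by (cases i) auto
  ultimately show "origin # map (shift e) \<beta> \<in> half_walks (Suc m)"
    using \<beta>(1) by (simp add: half_walks_def walks_iff)
  have "0 < xc v" if v: "v \<in> set (map (shift e) \<beta>)" for v
  proof -
    obtain i where "i < length (map (shift e) \<beta>)" "v = map (shift e) \<beta> ! i"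
      using v unfolding in_set_conv_nth by metis
    then show ?thesis
      using x[of i] \<beta>(1) by (simp add: walks_iff)
  qed
  then have "origin \<notin> set (map (shift e) \<beta>)"
    by (metis less_irrefl xc_origin)
  then show "sigma \<rho> \<phi> (origin # map (shift e) \<beta>) = \<rho> e * sigma \<rho> \<phi> \<beta>"
    using sigma_Cons_notin[of "map (shift e) \<beta>" origin] sigma_shift(1)[OF steps] step_e
    by (simp add: \<beta>')
qed

lemma walk_bottom_decomposition:
  assumes \<gamma>: "\<gamma> \<in> walks \<Omega> n" and e: "e \<in> \<Omega>" "0 < xc e" and t: "t = bottom_time n \<gamma>"
  shows "origin # map (shift e) (reversed_prefix t \<gamma>) \<in> half_walks (Suc t)"
    and "walk_suffix t \<gamma> \<in> half_walks (n - t)"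
    and "\<rho> e * sigma \<rho> \<phi> \<gamma>
      \<le> sigma \<rho> \<phi> (origin # map (shift e) (reversed_prefix t \<gamma>)) * sigma \<rho> \<phi> (walk_suffix t \<gamma>)"
proof -
  have tn: "t \<le> n" and bottom: "\<And>k. k \<le> n \<Longrightarrow> xc (\<gamma> ! t) \<le> xc (\<gamma> ! k)"
    and after: "\<And>k. t < k \<Longrightarrow> k \<le> n \<Longrightarrow> xc (\<gamma> ! t) < xc (\<gamma> ! k)"
    using bottom_time[where n=n and \<gamma>=\<gamma>] by (auto simp: t)
  have "0 \<le> xc (reversed_prefix t \<gamma> ! i)" if "i \<le> t" for i
    using reversed_prefix(2)[OF \<gamma> tn that] bottom[of "t - i"] tn by simp
  note prepend = prepend_step[OF reversed_prefix(1)[OF \<gamma> tn] this e]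
  show "origin # map (shift e) (reversed_prefix t \<gamma>) \<in> half_walks (Suc t)"
    by (rule prepend(1))
  show "walk_suffix t \<gamma> \<in> half_walks (n - t)"
    using walk_suffix_walks[OF \<gamma> tn] xc_walk_suffix[OF \<gamma>] after tn
    by (auto simp: half_walks_def)
  have "\<gamma> ! k \<noteq> \<gamma> ! t" if "t < k" "k \<le> n" for k
    using after[OF that] by auto
  moreover have "steps_in \<Omega> (drop t \<gamma>)"
    using \<gamma> by (simp add: walks_iff successively_conv_nth)
  ultimately have "sigma \<rho> \<phi> \<gamma> \<le> sigma \<rho> \<phi> (reversed_prefix t \<gamma>) * sigma \<rho> \<phi> (walk_suffix t \<gamma>)"
    using sigma_split_at_last_visit[OF \<gamma> tn] reversed_prefix(3)[OF \<gamma> tn]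
    by (simp add: walk_suffix_def sigma_shift)
  then show "\<rho> e * sigma \<rho> \<phi> \<gamma>
      \<le> sigma \<rho> \<phi> (origin # map (shift e) (reversed_prefix t \<gamma>)) * sigma \<rho> \<phi> (walk_suffix t \<gamma>)"
    using rho_nonneg[OF e(1)] by (simp add: prepend(2) mult.assoc mult_left_mono)
qed

lemma Z_le_half_walks_convolution:
  assumes e: "e \<in> \<Omega>" "0 < xc e" "0 < \<rho> e"
  shows "\<rho> e * Z n \<le> (\<Sum>m\<le>n. weight (half_walks (Suc m)) * weight (half_walks (n - m)))"
proof -
  define T where "T = (SIGMA m:{..n}. half_walks (Suc m) \<times> half_walks (n - m))"
  define h where "h \<gamma> = (bottom_time n \<gamma>, origin # map (shift e) (reversed_prefix (bottom_time n \<gamma>) \<gamma>),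
    walk_suffix (bottom_time n \<gamma>) \<gamma>)" for \<gamma>
  define G where "G = (\<lambda>(m :: nat, \<alpha>, \<beta>). sigma \<rho> \<phi> \<alpha> * sigma \<rho> \<phi> \<beta>)"
  define unreverse where
    "unreverse \<alpha> = (let r = map (step e) (tl \<alpha>) in rev (map (shift (negate (last r))) r))" for \<alpha>
  note bottom = walk_bottom_decomposition[OF _ e(1,2) refl]
  have "\<rho> e * Z n \<le> sum G T"
    unfolding Z_eq_weight weight_def sum_distrib_left
  proof (rule sum_le_sum_inj_on)
    show "finite T"
      by (auto simp: T_def finite_half_walks)
    show "inj_on h (walks \<Omega> n)"
    proof (rule inj_on_inverseI)
      fix \<gamma>
      assume \<gamma>: "\<gamma> \<in> walks \<Omega> n"
      note r = reversed_prefix[OF \<gamma> bottom_time(1)]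
      have "unreverse (origin # map (shift e) (reversed_prefix (bottom_time n \<gamma>) \<gamma>))
          = walk_prefix (bottom_time n \<gamma>) \<gamma>"
        using r(4) by (simp add: unreverse_def comp_def reversed_prefix_def rev_map)
      then show "(\<lambda>(m, \<alpha>, \<beta>). join (unreverse \<alpha>) \<beta>) (h \<gamma>) = \<gamma>"
        using join_walk_prefix_suffix[OF \<gamma> bottom_time(1)] by (simp add: h_def)
    qed
    show "h ` walks \<Omega> n \<subseteq> T"
      using bottom(1,2) bottom_time(1) by (auto simp: T_def h_def)
    show "\<rho> e * sigma \<rho> \<phi> \<gamma> \<le> G (h \<gamma>)" if "\<gamma> \<in> walks \<Omega> n" for \<gamma>
      using bottom(3)[OF that] by (simp add: G_def h_def)
    show "0 \<le> G x" if "x \<in> T" for x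
      using that e(3) sigma_walk_nonneg[OF subsetD[OF half_walks_walks]] by (auto simp: T_def G_def)
  qed
  also have "sum G T = (\<Sum>m\<le>n. \<Sum>p\<in>half_walks (Suc m) \<times> half_walks (n - m). G (m, p))"
    unfolding T_def
    using sum.Sigma[of "{..n}" "\<lambda>m. half_walks (Suc m) \<times> half_walks (n - m)" "\<lambda>m p. G (m, p)"]
    by (simp add: finite_half_walks)
  also have "\<dots> = (\<Sum>m\<le>n. weight (half_walks (Suc m)) * weight (half_walks (n - m)))"
    by (simp add: G_def weight_def sum_product sum.cartesian_product case_prod_beta)
  finally show ?thesis .
qed

lemma gf_walks_le_half_walks:
  assumes e: "e \<in> \<Omega>" "0 < xc e" "0 < \<rho> e" and z: "0 < z"
  shows "\<rho> e * z * (\<Sum>n\<le>N. Z n * z ^ n) \<le> gf half_walks z (Suc N) * gf half_walks z N"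
proof -
  define f where "f m = weight (half_walks (Suc m)) * z ^ Suc m" for m
  define g where "g l = weight (half_walks l) * z ^ l" for l
  have "\<rho> e * z * (\<Sum>n\<le>N. Z n * z ^ n) = (\<Sum>n\<le>N. z ^ Suc n * (\<rho> e * Z n))"
    by (simp add: sum_distrib_left algebra_simps)
  also have "\<dots> \<le> (\<Sum>n\<le>N. z ^ Suc n *
      (\<Sum>m\<le>n. weight (half_walks (Suc m)) * weight (half_walks (n - m))))"
    using Z_le_half_walks_convolution[OF e] z by (intro sum_mono mult_left_mono) auto
  also have "\<dots> = (\<Sum>n\<le>N. \<Sum>m\<le>n. f m * g (n - m))"
  proof (intro sum.cong refl)
    fix n
    have "f m * g (n - m) = z ^ Suc n * (weight (half_walks (Suc m)) * weight (half_walks (n - m)))"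
      if "m \<le> n" for m
    proof -
      have "z ^ Suc n = z ^ Suc m * z ^ (n - m)"
        using that by (simp flip: power_add)
      then show ?thesis
        by (simp add: f_def g_def ac_simps del: power_Suc)
    qed
    then show "z ^ Suc n * (\<Sum>m\<le>n. weight (half_walks (Suc m)) * weight (half_walks (n - m)))
        = (\<Sum>m\<le>n. f m * g (n - m))"
      by (simp add: sum_distrib_left)
  qed
  also have "\<dots> \<le> (\<Sum>m\<le>N. f m) * (\<Sum>l\<le>N. g l)"
    using z weight_walks_nonneg[OF half_walks_walks]
    by (intro sum_convolution_le) (simp_all add: f_def g_def)
  also have "(\<Sum>l\<le>N. g l) = gf half_walks z N"
    by (simp add: gf_def g_def)
  also have "(\<Sum>m\<le>N. f m) * gf half_walks z N \<le> gf half_walks z (Suc N) * gf half_walks z N"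
    using sum.atMost_Suc_shift[of "\<lambda>n. weight (half_walks n) * z ^ n" N] z
      weight_walks_nonneg[OF half_walks_walks] gf_nonneg[OF half_walks_walks]
    by (intro mult_right_mono) (simp_all add: gf_def f_def)
  finally show ?thesis .
qed

lemma gf_walks_le_exp:
  assumes e: "e \<in> \<Omega>" "0 < xc e" "0 < \<rho> e" and z: "0 < z"
  shows "\<rho> e * z * (\<Sum>n\<le>N. Z n * z ^ n) \<le> exp (2 * gf bridges z (Suc N))"
proof -
  have "gf bridges z N \<le> gf bridges z (Suc N)"
    using z by (intro gf_mono bridges_walks) auto
  then have "gf half_walks z N \<le> exp (gf bridges z (Suc N))"
    using gf_half_walks_le_exp[of z N] z by (meson exp_le_cancel_iff less_imp_le order_trans)
  moreover have "gf half_walks z (Suc N) \<le> exp (gf bridges z (Suc N))"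
    using gf_half_walks_le_exp z by simp
  moreover have "0 \<le> gf half_walks z N"
    using z by (intro gf_nonneg half_walks_walks) simp
  ultimately have "gf half_walks z (Suc N) * gf half_walks z N
      \<le> exp (gf bridges z (Suc N)) * exp (gf bridges z (Suc N))"
    by (intro mult_mono) simp_all
  then show ?thesis
    using gf_walks_le_half_walks[OF e z, of N] unfolding mult_2 exp_add by linarith
qed

lemma gf_bridges_zc_unbounded: "\<exists>N. C < gf bridges zc N"
proof (rule ccontr)
  assume "\<not> (\<exists>N. C < gf bridges zc N)"
  then have bounded: "gf bridges zc N \<le> C" for N
    by (simp add: not_less)
  obtain e where e: "e \<in> \<Omega>" "0 < xc e" "0 < \<rho> e"
    using forward_step by blast
  define c where "c = \<rho> e * zc"
  have "0 < c"
    using e zc_pos by (simp add: c_def)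
  obtain N :: nat where N: "exp (2 * C) / (c * exp (lambda0 \<Omega> \<rho> \<phi>)) < N"
    using reals_Archimedean2 by blast
  have "N * exp (lambda0 \<Omega> \<rho> \<phi>) \<le> (\<Sum>n\<le>N. exp (lambda0 \<Omega> \<rho> \<phi>))"
    by simp
  also have "\<dots> \<le> (\<Sum>n\<le>N. Z n * zc ^ n)"
    using Z_zc_power_ge by (rule sum_mono)
  finally have "c * (N * exp (lambda0 \<Omega> \<rho> \<phi>)) \<le> c * (\<Sum>n\<le>N. Z n * zc ^ n)"
    using \<open>0 < c\<close> by simp
  also have "\<dots> \<le> exp (2 * gf bridges zc (Suc N))"
    using gf_walks_le_exp[OF e zc_pos] by (simp add: c_def)
  also have "\<dots> \<le> exp (2 * C)"
    using bounded[of "Suc N"] by simp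
  finally show False
    using N \<open>0 < c\<close> by (simp add: field_simps)
qed

section \<open>The generating function of irreducible bridges\<close>

lemma bridges_0: "bridges 0 = {}"
  by (simp add: bridges_def bridge_def)

lemma irred_bridges_0: "irred_bridges 0 = {}"
  by (simp add: irred_bridges_def bridges_0)

lemma weight_bridges_convolution:
  "weight (bridges n)
    = weight (irred_bridges n) + (\<Sum>j\<le>n. weight (irred_bridges j) * weight (bridges (n - j)))"
proof -
  have "(\<Sum>j\<le>n. weight (irred_bridges j) * weight (bridges (n - j)))
      = (\<Sum>j\<in>{1..<n}. weight (irred_bridges j) * weight (bridges (n - j)))"
  proof (rule sum.mono_neutral_right)
    show "\<forall>i\<in>{..n} - {1..<n}. weight (irred_bridges i) * weight (bridges (n - i)) = 0"
    proof
      fix i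
      assume "i \<in> {..n} - {1..<n}"
      then have "i = 0 \<or> i = n"
        by auto
      then show "weight (irred_bridges i) * weight (bridges (n - i)) = 0"
        by (auto simp: irred_bridges_0 bridges_0 weight_def)
    qed
  qed auto
  then show ?thesis
    using weight_bridges_renewal[of n] by simp
qed

lemma gf_bridges_renewal:
  "gf bridges z M = gf irred_bridges z M +
    (\<Sum>n\<le>M. \<Sum>j\<le>n. (weight (irred_bridges j) * z ^ j) * (weight (bridges (n - j)) * z ^ (n - j)))"
proof -
  have "(\<Sum>j\<le>n. (weight (irred_bridges j) * z ^ j) * (weight (bridges (n - j)) * z ^ (n - j)))
      = (\<Sum>j\<le>n. weight (irred_bridges j) * weight (bridges (n - j))) * z ^ n" for n
  proof -
    have "z ^ j * z ^ (n - j) = z ^ n" if "j \<le> n" for j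
      using that by (simp flip: power_add)
    then show ?thesis
      unfolding sum_distrib_right by (intro sum.cong) (auto simp: ac_simps)
  qed
  then show ?thesis
    unfolding gf_def by (subst weight_bridges_convolution) (simp add: algebra_simps sum.distrib)
qed

lemma gf_irred_bridges_mono: "0 \<le> z \<Longrightarrow> N \<le> M \<Longrightarrow> gf irred_bridges z N \<le> gf irred_bridges z M"
  by (rule gf_mono) (auto simp: irred_bridges_def dest: subsetD[OF bridges_walks])

lemma gf_bridges_nonneg: "0 \<le> z \<Longrightarrow> 0 \<le> gf bridges z N"
  by (rule gf_nonneg[OF bridges_walks])

lemma gf_irred_bridges_mult_le:
  assumes "0 \<le> z" "N \<le> M"
  shows "gf irred_bridges z N * (1 + gf bridges z M) \<le> gf bridges z (2 * M)"
proof -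
  have "gf irred_bridges z N * (1 + gf bridges z M) \<le> gf irred_bridges z M * (1 + gf bridges z M)"
    using gf_irred_bridges_mono assms gf_bridges_nonneg by (intro mult_right_mono) auto
  also have "\<dots> \<le> gf irred_bridges z (2 * M) + gf irred_bridges z M * gf bridges z M"
    using gf_irred_bridges_mono[of z M "2 * M"] assms by (simp add: algebra_simps)
  also have "\<dots> \<le> gf irred_bridges z (2 * M) + (\<Sum>n\<le>2 * M. \<Sum>j\<le>n.
      (weight (irred_bridges j) * z ^ j) * (weight (bridges (n - j)) * z ^ (n - j)))"
    unfolding gf_def using assms weight_irred_bridges_nonneg weight_bridges_nonneg
    by (intro add_left_mono sum_convolution_ge) auto
  also have "\<dots> = gf bridges z (2 * M)"
    by (rule gf_bridges_renewal[symmetric])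
  finally show ?thesis .
qed

lemma gf_irred_bridges_le_1_below:
  assumes z: "0 < z" "z < zc"
  shows "gf irred_bridges z N \<le> 1"
proof -
  have "summable (\<lambda>n. weight (bridges n) * z ^ n)"
    using Z_summable[OF z] weight_walks_subset[OF bridges_walks] weight_bridges_nonneg z
    by (rule_tac summable_comparison_test[of _ "\<lambda>n. Z n * z ^ n"]) (auto intro!: mult_right_mono)
  then have lim: "(\<lambda>M. gf bridges z M) \<longlonglongrightarrow> (\<Sum>n. weight (bridges n) * z ^ n)"
    and le: "\<And>M. gf bridges z M \<le> (\<Sum>n. weight (bridges n) * z ^ n)"
    unfolding gf_def using summable_LIMSEQ' z weight_bridges_nonneg
    by (auto intro!: sum_le_suminf)
  define B where "B = (\<Sum>n. weight (bridges n) * z ^ n)"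
  have "gf irred_bridges z N * (1 + B) \<le> B"
  proof (rule LIMSEQ_le_const2)
    show "(\<lambda>M. gf irred_bridges z N * (1 + gf bridges z M)) \<longlonglongrightarrow> gf irred_bridges z N * (1 + B)"
      unfolding B_def by (intro tendsto_intros lim)
    show "\<exists>N'. \<forall>M\<ge>N'. gf irred_bridges z N * (1 + gf bridges z M) \<le> B"
      using gf_irred_bridges_mult_le z le unfolding B_def by (meson less_imp_le order_trans)
  qed
  moreover have "0 \<le> B"
    using le[of 0] gf_bridges_nonneg[of z 0] z by (simp add: B_def)
  ultimately show ?thesis
    by (smt (verit, best) mult_le_cancel_left1 mult.commute)
qed

lemma gf_irred_bridges_zc_le_1: "gf irred_bridges zc N \<le> 1"
proof (rule tendsto_upperbound)
  show "((\<lambda>z. gf irred_bridges z N) \<longlongrightarrow> gf irred_bridges zc N) (at_left zc)"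
    unfolding gf_def by (intro tendsto_intros)
  have "eventually (\<lambda>z. z \<in> {0<..<zc}) (at_left zc)"
    using zc_pos by (rule eventually_at_left_real)
  then show "eventually (\<lambda>z. gf irred_bridges z N \<le> 1) (at_left zc)"
    by eventually_elim (auto intro: gf_irred_bridges_le_1_below)
qed simp

lemma gf_irred_bridges_zc_tends_to_1: "a < 1 \<Longrightarrow> \<exists>N. a < gf irred_bridges zc N"
proof (rule ccontr)
  assume "a < 1" "\<not> (\<exists>N. a < gf irred_bridges zc N)"
  then have I: "gf irred_bridges zc N \<le> a" for N
    by (simp add: not_less)
  have "gf bridges zc N \<le> a / (1 - a)" for N
  proof -
    have "(\<Sum>n\<le>N. \<Sum>j\<le>n.
        (weight (irred_bridges j) * zc ^ j) * (weight (bridges (n - j)) * zc ^ (n - j)))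
        \<le> gf irred_bridges zc N * gf bridges zc N"
      unfolding gf_def using zc_pos weight_irred_bridges_nonneg weight_bridges_nonneg
      by (intro sum_convolution_le) auto
    then have "gf bridges zc N \<le> gf irred_bridges zc N + gf irred_bridges zc N * gf bridges zc N"
      using gf_bridges_renewal[of zc N] by linarith
    also have "\<dots> \<le> a + a * gf bridges zc N"
      using I[of N] gf_bridges_nonneg[of zc N] zc_pos by (intro add_mono mult_right_mono) auto
    finally show ?thesis
      using \<open>a < 1\<close> by (simp add: field_simps)
  qed
  then show False
    using gf_bridges_zc_unbounded[of "a / (1 - a)"] by (meson not_less)
qed

lemma irreducible_bridges_eq: "irreducible_bridges \<Omega> = (\<Union>n. irred_bridges n)"
proof (intro equalityI subsetI)
  fix \<gamma>
  assume "\<gamma> \<in> (\<Union>n. irred_bridges n)"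
  then obtain n where "bridge \<Omega> n \<gamma>" "\<not> (\<exists>i. renewal_time \<gamma> i)"
    by (auto simp: irred_bridges_def bridges_def)
  then show "\<gamma> \<in> irreducible_bridges \<Omega>"
    by (auto simp: irreducible_bridges_def bridge_def)
qed (auto simp: irreducible_bridges_def irred_bridges_def bridges_def)

lemma irred_bridges_wlen: "\<gamma> \<in> irred_bridges n \<Longrightarrow> wlen \<gamma> = n"
  by (auto simp: irred_bridges_def bridges_def bridge_def walks_wlen)

lemma has_sum_irreducible_bridges:
  "((\<lambda>\<gamma>. exp (- lambda0 \<Omega> \<rho> \<phi> * real (wlen \<gamma>)) * sigma \<rho> \<phi> \<gamma>) has_sum 1) (irreducible_bridges \<Omega>)"
proof -
  define f where "f = (\<lambda>\<gamma>. exp (- lambda0 \<Omega> \<rho> \<phi> * real (wlen \<gamma>)) * sigma \<rho> \<phi> \<gamma>)"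
  define U where "U N = (\<Union>n\<le>N. irred_bridges n)" for N
  have f: "f \<gamma> = zc ^ n * sigma \<rho> \<phi> \<gamma>" if "\<gamma> \<in> irred_bridges n" for \<gamma> n
    using irred_bridges_wlen[OF that]
    by (simp add: f_def zc_def mult.commute flip: exp_of_nat_mult)
  have sum_U: "sum f (U N) = gf irred_bridges zc N" for N
  proof -
    have "sum f (U N) = (\<Sum>n\<le>N. sum f (irred_bridges n))"
      unfolding U_def using finite_irred_bridges
      by (intro sum.UNION_disjoint) (auto dest: irred_bridges_wlen)
    also have "\<dots> = gf irred_bridges zc N"
      unfolding gf_def weight_def
      by (intro sum.cong refl) (simp add: f sum_distrib_left mult.commute)
    finally show ?thesis .
  qed
  have "(f has_sum 1) (\<Union>n. irred_bridges n)"
  proof (rule nonneg_has_sum_exhaustion)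
    show "0 \<le> f \<gamma>" if "\<gamma> \<in> (\<Union>n. irred_bridges n)" for \<gamma>
      using that bridges_walks
      by (auto simp: f_def irred_bridges_def intro!: mult_nonneg_nonneg sigma_walk_nonneg)
    show "finite (U N)" "U N \<subseteq> (\<Union>n. irred_bridges n)" for N
      by (auto simp: U_def finite_irred_bridges)
    show "\<exists>N. X \<subseteq> U N" if "finite X" "X \<subseteq> (\<Union>n. irred_bridges n)" for X
    proof
      show "X \<subseteq> U (Max (wlen ` X))"
        using that by (force simp: U_def intro: Max_ge dest: irred_bridges_wlen)
    qed
    show "sum f (U N) \<le> 1" for N
      using gf_irred_bridges_zc_le_1 by (simp add: sum_U)
    show "\<exists>N. a < sum f (U N)" if "a < 1" for a
      using gf_irred_bridges_zc_tends_to_1[OF that] by (simp add: sum_U)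
  qed
  then show ?thesis
    unfolding f_def irreducible_bridges_eq .
qed

end

theorem theorem6:
  fixes d :: nat and \<Omega> :: "pt set" and \<rho> :: "pt \<Rightarrow> real" and \<phi> :: "nat \<Rightarrow> real"
  assumes "d \<ge> 1"
    and "finite \<Omega>" and "\<forall>v\<in>\<Omega>. in_Zd d v" and "origin \<notin> \<Omega>"
    and "\<forall>g. sym_Zd d g \<longrightarrow> g ` \<Omega> = \<Omega>"
    and "\<forall>a. \<phi> a \<ge> 0" and "\<phi> 0 = 0" and "\<phi> 1 = 0"
    and "\<forall>a b. \<phi> (a + b) \<ge> \<phi> a + \<phi> b"
    and "\<forall>v\<in>\<Omega>. \<rho> v \<ge> 0" and "(\<Sum>v\<in>\<Omega>. \<rho> v) = 1"
    and "\<forall>g. sym_Zd d g \<longrightarrow> (\<forall>v\<in>\<Omega>. \<rho> (g v) = \<rho> v)"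
  shows "((\<lambda>\<gamma>. exp (- lambda0 \<Omega> \<rho> \<phi> * real (wlen \<gamma>)) * sigma \<rho> \<phi> \<gamma>)
            has_sum 1) (irreducible_bridges \<Omega>)"
proof -
  interpret polymer_model d \<Omega> \<rho> \<phi>
    using assms by unfold_locales auto
  show ?thesis
    by (rule has_sum_irreducible_bridges)
qed

end
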